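(* Let $(\mathcal{P},\Sigma,\mu)$ be a measure space with $\mathcal{P}\subseteq\mathbb{C}^{n_p}$, such that $\overline{\mathsf{p}}\in\mathcal{P}$ for all $\mathsf{p}\in\mathcal{P}$, $\overline{S}\in\Sigma$ for all $S\in\Sigma$, and $\mu(\overline{S})=\mu(S)$ for all $S\in\Sigma$. Let $y:\mathcal{P}\to\mathbb{C}^{n_o\times n_f}$ be measurable, square-integrable ($\int_{\mathcal{P}}\|y(\mathsf{p})\|_F^2\,d\mu(\mathsf{p})<\infty$), and satisfy $\overline{y(\mathsf{p})}=y(\overline{\mathsf{p}})$ for all $\mathsf{p}\in\mathcal{P}$. Let $\hat\alpha_i,\hat\beta_j,\hat\gamma_k:\mathcal{P}\to\mathbb{C}$ ($i=1,\dots,q_A$, $j=1,\dots,q_B$, $k=1,\dots,q_C$) be measurable functions with $f(\overline{\mathsf{p}})=\overline{f(\mathsf{p})}$ for each such $f$ and all $\mathsf{p}$, and \[ \int_{\mathcal{P}}\left(\frac{\sum_{j=1}^{q_B}|\hat\beta_j(\mathsf{p})|\,\sum_{k=1}^{q_C}|\hat\gamma_k(\mathsf{p})|}{\sum_{i=1}^{q_A}|\hat\alpha_i(\mathsf{p})|}\right)^{2}\,d\mu(\mathsf{p})<\infty . \] For $(\hat A_i,\hat B_j,\hat C_k)\in R=(\mathbb{R}^{r\times r})^{q_A}\times(\mathbb{R}^{r\times n_f})^{q_B}\times(\mathbb{R}^{n_o\times r})^{q_C}$ let $\hat{\mathcal{A}}(\mathsf{p})=\sum_{i}\hat\alpha_i(\mathsf{p})\hat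 A_i$, $\hat{\mathcal{B}}(\mathsf{p})=\sum_{j}\hat\beta_j(\mathsf{p})\hat B_j$, $\hat{\mathcal{C}}(\mathsf{p})=\sum_{k}\hat\gamma_k(\mathsf{p})\hat C_k$, and let $\mathcal{R}\subseteq R$ be the set of tuples with $\operatorname*{ess\,sup}_{\mathsf{p}\in\mathcal{P}}\|\hat\alpha_i(\mathsf{p})\hat{\mathcal{A}}(\mathsf{p})^{-1}\|_F<\infty$ for all $i=1,\dots,q_A$. For a tuple in $\mathcal{R}$ define $\hat x(\mathsf{p})=\hat{\mathcal{A}}(\mathsf{p})^{-1}\hat{\mathcal{B}}(\mathsf{p})$, $\hat y(\mathsf{p})=\hat{\mathcal{C}}(\mathsf{p})\hat x(\mathsf{p})$, the dual state $\hat x_d(\mathsf{p})=\hat{\mathcal{A}}(\mathsf{p})^{-*}\hat{\mathcal{C}}(\mathsf{p})^{*}$, and \[ \mathcal{J}(\hat A_i,\hat B_j,\hat C_k)=\int_{\mathcal{P}}\|y(\mathsf{p})-\hat y(\mathsf{p})\|_F^2\,d\mu(\mathsf{p}). \] Then for any $(\hat A_i,\hat B_j,\hat C_k)\in\mathcal{R}$, the gradients of $\mathcal{J}$ with respect to the reduced matrices are \begin{align*} \nabla_{\hat A_i}\mathcal{J}&=2\int_{\mathcal{P}}\hat\alpha_i(\overline{\mathsf{p}})\,\hat x_d(\mathsf{p})\,[y(\mathsf{p})-\hat y(\mathsf{p})]\,\hat x(\mathsf{p})^{*}\,d\mu(\mathsf{p}),&i=1,\dots,q_A,\\ \nabla_{\hat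 B_j}\mathcal{J}&=2\int_{\mathcal{P}}\hat\beta_j(\overline{\mathsf{p}})\,\hat x_d(\mathsf{p})\,[\hat y(\mathsf{p})-y(\mathsf{p})]\,d\mu(\mathsf{p}),&j=1,\dots,q_B,\\ \nabla_{\hat C_k}\mathcal{J}&=2\int_{\mathcal{P}}\hat\gamma_k(\overline{\mathsf{p}})\,[\hat y(\mathsf{p})-y(\mathsf{p})]\,\hat x(\mathsf{p})^{*}\,d\mu(\mathsf{p}),&k=1,\dots,q_C. \end{align*}
   Context: $\|\cdot\|_F$ is the Frobenius norm, $(\cdot)^*$ the conjugate transpose, $M^{-*}=(M^{-1})^*$. For a Fréchet differentiable real-valued function $f$ on an open subset of a real Hilbert space, the gradient $\nabla f(x)$ is the unique element with $f(x+h)=f(x)+\langle\nabla f(x),h\rangle+o(\|h\|)$; partial gradients with respect to one matrix argument are defined analogously, using the Frobenius inner product $\langle X,Y\rangle=\operatorname{trace}(X^{\mathrm T}Y)$ on real matrices. The essential supremum is with respect to $\mu$. *)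

theory Defs
  imports "HOL-Analysis.Analysis" "HOL-Probability.Essential_Supremum"
begin

text \<open>Complex matrices are rendered as complex^'n^'m (m rows, n columns),
  real matrices as real^'n^'m. The norm on these types is the Frobenius norm,
  and the inner product on real^'n^'m is the Frobenius inner product trace(X^T Y).\<close>

definition cvec_cnj :: "complex^'n \<Rightarrow> complex^'n" where
  "cvec_cnj p = (\<chi> i. cnj (p $ i))"

definition cmat_cnj :: "complex^'n^'m \<Rightarrow> complex^'n^'m" where
  "cmat_cnj X = (\<chi> a b. cnj (X $ a $ b))"

definition cmat_adj :: "complex^'n^'m \<Rightarrow> complex^'m^'n" where
  "cmat_adj X = (\<chi> a b. cnj (X $ b $ a))"

definition cmat_of_real :: "real^'n^'m \<Rightarrow> complex^'n^'m" where
  "cmat_of_real X = (\<chi> a b. complex_of_real (X $ a $ b))"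

definition csmult :: "complex \<Rightarrow> complex^'n^'m \<Rightarrow> complex^'n^'m" where
  "csmult c X = (\<chi> a b. c * X $ a $ b)"

definition pmat :: "('q::finite \<Rightarrow> 'p \<Rightarrow> complex) \<Rightarrow> ('q \<Rightarrow> real^'n^'m) \<Rightarrow> 'p \<Rightarrow> complex^'n^'m" where
  "pmat f A p = (\<Sum>i\<in>UNIV. csmult (f i p) (cmat_of_real (A i)))"

definition xhat where
  "xhat alpha beta A B p = matrix_inv (pmat alpha A p) ** pmat beta B p"

definition yhat where
  "yhat alpha beta gamma A B C p = pmat gamma C p ** xhat alpha beta A B p"

definition xdual where
  "xdual alpha gamma A C p = cmat_adj (matrix_inv (pmat alpha A p)) ** cmat_adj (pmat gamma C p)"

definition admissible :: "'pp measure \<Rightarrow> ('qa::finite \<Rightarrow> 'pp \<Rightarrow> complex) \<Rightarrow> ('qa \<Rightarrow> real^'r^'r) \<Rightarrow> bool" where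
  "admissible \<mu> alpha A \<longleftrightarrow>
     (AE p in \<mu>. invertible (pmat alpha A p)) \<and>
     (\<forall>i. esssup \<mu> (\<lambda>p. ereal (norm (csmult (alpha i p) (matrix_inv (pmat alpha A p))))) < \<infinity>)"

definition Jcost where
  "Jcost \<mu> y alpha beta gamma A B C =
     (\<integral>p. (norm (y p - yhat alpha beta gamma A B C p))\<^sup>2 \<partial>\<mu>)"

end

theory Submission
  imports Defs
begin

(* For each block M of reduced matrices, the reduced output near the current point is
   yhat + U (H - M) V plus a remainder quadratic in H - M.  For the blocks B_j and C_k, yhat is
   affine in the block and the remainder vanishes; for A_i the block enters through the inverse of
   A(p) = sum_i alpha_i(p) A_i, and the essential-supremum bound on alpha_i A(p)^-1 controls the
   second-order expansion of that inverse uniformly in p.  All factors are dominated by constant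
   multiples of the square-integrable ratio (sum |beta_j|)(sum |gamma_k|) / (sum |alpha_i|), so the
   cost can be differentiated under the integral: J'(K) = 2 Re integral <yhat - y, U K V>, i.e. the
   gradient is 2 Re integral U^* (yhat - y) V^*.  Finally, p -> conj p preserves mu and maps this
   integrand to its complex conjugate, so the complex integral is already real. *)

section \<open>Frobenius norm and algebra of complex matrices\<close>

lemma norm_vec_power2: "(norm (x::'a::real_normed_vector^'n))\<^sup>2 = (\<Sum>i\<in>UNIV. (norm (x$i))\<^sup>2)"
  by (simp add: norm_vec_def L2_set_def sum_nonneg)

lemma norm_matrix_power2:
  "(norm (X::'a::real_normed_vector^'n^'m))\<^sup>2 = (\<Sum>a\<in>UNIV. \<Sum>b\<in>UNIV. (norm (X$a$b))\<^sup>2)"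
  by (simp add: norm_vec_power2)

lemma norm_sum_mult_power2_le:
  fixes x y :: "'b \<Rightarrow> 'a::real_normed_div_algebra"
  shows "(norm (\<Sum>b\<in>S. x b * y b))\<^sup>2 \<le> (\<Sum>b\<in>S. (norm (x b))\<^sup>2) * (\<Sum>b\<in>S. (norm (y b))\<^sup>2)"
proof -
  have "norm (\<Sum>b\<in>S. x b * y b) \<le> (\<Sum>b\<in>S. norm (x b) * norm (y b))"
    by (metis (no_types, lifting) norm_mult norm_sum sum.cong)
  then have "(norm (\<Sum>b\<in>S. x b * y b))\<^sup>2 \<le> (\<Sum>b\<in>S. norm (x b) * norm (y b))\<^sup>2"
    by (simp add: power_mono)
  also have "\<dots> \<le> (\<Sum>b\<in>S. (norm (x b))\<^sup>2) * (\<Sum>b\<in>S. (norm (y b))\<^sup>2)"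
    by (rule Cauchy_Schwarz_ineq_sum)
  finally show ?thesis .
qed

lemma norm_matrix_mult_le:
  fixes X :: "'a::real_normed_div_algebra^'k^'m" and Y :: "'a^'n^'k"
  shows "norm (X ** Y) \<le> norm X * norm Y"
proof -
  have "(norm (X ** Y))\<^sup>2 = (\<Sum>a\<in>UNIV. \<Sum>c\<in>UNIV. (norm (\<Sum>b\<in>UNIV. X$a$b * Y$b$c))\<^sup>2)"
    by (simp add: norm_matrix_power2 matrix_matrix_mult_def)
  also have "\<dots> \<le> (\<Sum>a\<in>UNIV. \<Sum>c\<in>UNIV. (\<Sum>b\<in>UNIV. (norm (X$a$b))\<^sup>2) * (\<Sum>b\<in>UNIV. (norm (Y$b$c))\<^sup>2))"
    by (intro sum_mono norm_sum_mult_power2_le)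
  also have "\<dots> = (\<Sum>a\<in>UNIV. \<Sum>b\<in>UNIV. (norm (X$a$b))\<^sup>2) * (\<Sum>c\<in>UNIV. \<Sum>b\<in>UNIV. (norm (Y$b$c))\<^sup>2)"
    by (rule sum_product[symmetric])
  also have "\<dots> = (norm X * norm Y)\<^sup>2"
    by (simp only: norm_matrix_power2 power_mult_distrib sum.swap[of "\<lambda>c b. (norm (Y$b$c))\<^sup>2"])
  finally show ?thesis
    by (rule power2_le_imp_le) simp
qed

lemma norm_matrix_vector_mult_le:
  fixes X :: "'a::real_normed_div_algebra^'k^'m"
  shows "norm (X *v v) \<le> norm X * norm v"
proof -
  have "(norm (X *v v))\<^sup>2 = (\<Sum>a\<in>UNIV. (norm (\<Sum>b\<in>UNIV. X$a$b * v$b))\<^sup>2)"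
    by (simp add: norm_vec_power2 matrix_vector_mult_def)
  also have "\<dots> \<le> (\<Sum>a\<in>UNIV. (\<Sum>b\<in>UNIV. (norm (X$a$b))\<^sup>2) * (\<Sum>b\<in>UNIV. (norm (v$b))\<^sup>2))"
    by (intro sum_mono norm_sum_mult_power2_le)
  also have "\<dots> = (norm X * norm v)\<^sup>2"
    by (simp only: sum_distrib_right[symmetric] norm_matrix_power2 norm_vec_power2 power_mult_distrib)
  finally show ?thesis
    by (rule power2_le_imp_le) simp
qed

lemma norm_matrix_mult_le_mult:
  fixes X :: "'a::real_normed_div_algebra^'k^'m" and Y :: "'a^'n^'k"
  shows "norm X \<le> a \<Longrightarrow> norm Y \<le> b \<Longrightarrow> norm (X ** Y) \<le> a * b"
  by (rule order.trans[OF norm_matrix_mult_le]) (intro mult_mono, auto intro: order.trans[OF norm_ge_zero])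

lemma norm_csmult: "norm (csmult c X) = cmod c * norm X"
  by (rule power2_eq_imp_eq)
     (simp_all add: norm_matrix_power2 csmult_def power_mult_distrib norm_mult sum_distrib_left)

lemma norm_cmat_of_real: "norm (cmat_of_real X) = norm X"
  by (rule power2_eq_imp_eq) (simp_all add: norm_matrix_power2 cmat_of_real_def)

lemma norm_cmat_adj: "norm (cmat_adj X) = norm X"
  by (rule power2_eq_imp_eq) (simp_all add: norm_matrix_power2 cmat_adj_def, subst sum.swap, rule refl)

lemma norm_cmat_cnj: "norm (cmat_cnj X) = norm X"
  by (rule power2_eq_imp_eq) (simp_all add: norm_matrix_power2 cmat_cnj_def)

lemma norm_matrix_sandwich_le: "norm (U ** cmat_of_real K ** V) \<le> norm U * norm V * norm K"
  using norm_matrix_mult_le_mult[OF norm_matrix_mult_le order_refl, of U "cmat_of_real K" V]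
  by (simp add: norm_cmat_of_real ac_simps)

lemma matrix_add_rdistrib: "((A::'a::ring_1^'n^'m) + B) ** C = A ** C + B ** C"
  by (simp add: matrix_matrix_mult_def vec_eq_iff distrib_right sum.distrib)

lemma matrix_diff_ldistrib: "(A::'a::ring_1^'n^'m) ** (B - C) = A ** B - A ** C"
  by (simp add: matrix_matrix_mult_def vec_eq_iff right_diff_distrib sum_subtractf)

lemma matrix_diff_rdistrib: "((A::'a::ring_1^'n^'m) - B) ** C = A ** C - B ** C"
  by (simp add: matrix_matrix_mult_def vec_eq_iff left_diff_distrib sum_subtractf)

lemma matrix_minus_left: "(- (A::'a::ring_1^'n^'m)) ** B = - (A ** B)"
  by (simp add: matrix_matrix_mult_def vec_eq_iff sum_negf)

lemma csmult_matrix_mult_left: "csmult c X ** Y = csmult c (X ** Y)"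
  by (simp add: csmult_def matrix_matrix_mult_def vec_eq_iff sum_distrib_left mult.assoc)

lemma csmult_matrix_mult_right: "X ** csmult c Y = csmult c (X ** Y)"
  by (simp add: csmult_def matrix_matrix_mult_def vec_eq_iff sum_distrib_left ac_simps)

lemma csmult_diff: "csmult c (X - Y) = csmult c X - csmult c Y"
  by (simp add: csmult_def vec_eq_iff right_diff_distrib)

lemma csmult_0_left [simp]: "csmult 0 X = 0"
  by (simp add: csmult_def vec_eq_iff)

lemma cmat_of_real_add: "cmat_of_real (X + Y) = cmat_of_real X + cmat_of_real Y"
  by (simp add: cmat_of_real_def vec_eq_iff)

lemma cmat_of_real_diff: "cmat_of_real (X - Y) = cmat_of_real X - cmat_of_real Y"
  by (simp add: cmat_of_real_def vec_eq_iff)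

lemma cmat_of_real_scaleR: "cmat_of_real (r *\<^sub>R X) = r *\<^sub>R cmat_of_real X"
  by (simp add: cmat_of_real_def vec_eq_iff complex_eq_iff)

lemma linear_matrix_sandwich: "linear (\<lambda>K. U ** cmat_of_real K ** V)"
  by (rule linearI) (simp_all add: cmat_of_real_add cmat_of_real_scaleR matrix_add_ldistrib
      matrix_add_rdistrib scalar_matrix_assoc matrix_scalar_ac)

lemma cmat_adj_mult: "cmat_adj (X ** Y) = cmat_adj Y ** cmat_adj X"
  by (simp add: cmat_adj_def matrix_matrix_mult_def vec_eq_iff mult.commute)

lemma cmat_adj_csmult: "cmat_adj (csmult c X) = csmult (cnj c) (cmat_adj X)"
  by (simp add: cmat_adj_def csmult_def vec_eq_iff)

lemma cmat_adj_minus: "cmat_adj (- X) = - cmat_adj X"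
  by (simp add: cmat_adj_def vec_eq_iff)

lemma cmat_adj_mat1: "cmat_adj (mat 1) = mat 1"
  by (simp add: cmat_adj_def mat_def vec_eq_iff)

lemma cmat_cnj_mult: "cmat_cnj (X ** Y) = cmat_cnj X ** cmat_cnj Y"
  by (simp add: cmat_cnj_def matrix_matrix_mult_def vec_eq_iff)

lemma cmat_cnj_add: "cmat_cnj (X + Y) = cmat_cnj X + cmat_cnj Y"
  by (simp add: cmat_cnj_def vec_eq_iff)

lemma cmat_cnj_diff: "cmat_cnj (X - Y) = cmat_cnj X - cmat_cnj Y"
  by (simp add: cmat_cnj_def vec_eq_iff)

lemma cmat_cnj_minus: "cmat_cnj (- X) = - cmat_cnj X"
  by (simp add: cmat_cnj_def vec_eq_iff)

lemma cmat_cnj_csmult: "cmat_cnj (csmult c X) = csmult (cnj c) (cmat_cnj X)"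
  by (simp add: cmat_cnj_def csmult_def vec_eq_iff)

lemma cmat_cnj_adj: "cmat_cnj (cmat_adj X) = cmat_adj (cmat_cnj X)"
  by (simp add: cmat_cnj_def cmat_adj_def vec_eq_iff)

lemma cmat_cnj_of_real [simp]: "cmat_cnj (cmat_of_real X) = cmat_of_real X"
  by (simp add: cmat_cnj_def cmat_of_real_def vec_eq_iff)

lemma cmat_cnj_mat1: "cmat_cnj (mat 1) = mat 1"
  by (simp add: cmat_cnj_def mat_def vec_eq_iff)

lemma cmat_cnj_sum: "cmat_cnj (\<Sum>i\<in>S. f i) = (\<Sum>i\<in>S. cmat_cnj (f i))"
  by (induction S rule: infinite_finite_induct) (simp_all add: cmat_cnj_add cmat_cnj_def vec_eq_iff)

lemma cvec_cnj_cnj [simp]: "cvec_cnj (cvec_cnj p) = p"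
  by (simp add: cvec_cnj_def vec_eq_iff)

lemma bounded_linear_cmat_cnj: "bounded_linear cmat_cnj"
  by (rule bounded_linear_intro[where K=1])
     (simp_all add: cmat_cnj_add norm_cmat_cnj, simp add: cmat_cnj_def vec_eq_iff)

lemma cmat_of_real_Re_eq:
  assumes "cmat_cnj S = S"
  shows "cmat_of_real (\<chi> a b. Re (S$a$b)) = S"
proof -
  have "cnj (S$a$b) = S$a$b" for a b
    using assms by (simp add: cmat_cnj_def vec_eq_iff)
  then show ?thesis
    by (simp add: cmat_of_real_def vec_eq_iff complex_eq_iff)
qed

lemma inner_cmat: "inner (X::complex^'n^'m) Y = Re (\<Sum>a\<in>UNIV. \<Sum>b\<in>UNIV. cnj (X$a$b) * Y$a$b)"
  by (simp add: inner_vec_def inner_complex_def Re_sum)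

lemma inner_cmat_of_real: "inner (cmat_of_real G) (cmat_of_real K) = G \<bullet> K"
  by (simp add: inner_vec_def cmat_of_real_def inner_complex_def)

lemma inner_matrix_mult_left: "inner (cmat_adj U ** E) X = inner E (U ** X)"
proof -
  have "(\<Sum>c\<in>UNIV. \<Sum>b\<in>UNIV. cnj ((cmat_adj U ** E)$c$b) * X$c$b)
      = (\<Sum>c\<in>UNIV. \<Sum>b\<in>UNIV. \<Sum>a\<in>UNIV. cnj (E$a$b) * (U$a$c * X$c$b))"
    by (simp add: matrix_matrix_mult_def cmat_adj_def sum_distrib_left sum_distrib_right ac_simps)
  also have "\<dots> = (\<Sum>c\<in>UNIV. \<Sum>a\<in>UNIV. \<Sum>b\<in>UNIV. cnj (E$a$b) * (U$a$c * X$c$b))"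
    by (rule sum.cong[OF refl], rule sum.swap)
  also have "\<dots> = (\<Sum>a\<in>UNIV. \<Sum>c\<in>UNIV. \<Sum>b\<in>UNIV. cnj (E$a$b) * (U$a$c * X$c$b))"
    by (rule sum.swap)
  also have "\<dots> = (\<Sum>a\<in>UNIV. \<Sum>b\<in>UNIV. \<Sum>c\<in>UNIV. cnj (E$a$b) * (U$a$c * X$c$b))"
    by (rule sum.cong[OF refl], rule sum.swap)
  also have "\<dots> = (\<Sum>a\<in>UNIV. \<Sum>b\<in>UNIV. cnj (E$a$b) * (U ** X)$a$b)"
    by (simp add: matrix_matrix_mult_def sum_distrib_left)
  finally show ?thesis
    by (simp add: inner_cmat)
qed

lemma inner_matrix_mult_right: "inner (E ** cmat_adj V) X = inner E (X ** V)"
proof -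
  have "(\<Sum>a\<in>UNIV. \<Sum>c\<in>UNIV. cnj ((E ** cmat_adj V)$a$c) * X$a$c)
      = (\<Sum>a\<in>UNIV. \<Sum>c\<in>UNIV. \<Sum>b\<in>UNIV. cnj (E$a$b) * (X$a$c * V$c$b))"
    by (simp add: matrix_matrix_mult_def cmat_adj_def sum_distrib_left sum_distrib_right ac_simps)
  also have "\<dots> = (\<Sum>a\<in>UNIV. \<Sum>b\<in>UNIV. \<Sum>c\<in>UNIV. cnj (E$a$b) * (X$a$c * V$c$b))"
    by (rule sum.cong[OF refl], rule sum.swap)
  also have "\<dots> = (\<Sum>a\<in>UNIV. \<Sum>b\<in>UNIV. cnj (E$a$b) * (X ** V)$a$b)"
    by (simp add: matrix_matrix_mult_def sum_distrib_left)
  finally show ?thesis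
    by (simp add: inner_cmat)
qed

lemma inner_matrix_mult_adj: "inner (cmat_adj U ** R ** cmat_adj V) X = inner R (U ** X ** V)"
  by (simp only: matrix_mul_assoc[symmetric] inner_matrix_mult_left inner_matrix_mult_right)

section \<open>Inverse matrices\<close>

lemma matrix_inv_right: "invertible X \<Longrightarrow> X ** matrix_inv X = mat 1"
  and matrix_inv_left: "invertible X \<Longrightarrow> matrix_inv X ** X = mat 1"
  unfolding invertible_def matrix_inv_def by (metis (mono_tags, lifting) someI_ex)+

lemma matrix_inv_unique:
  fixes X :: "'a::field^'n^'n"
  assumes "X ** Y = mat 1"
  shows "matrix_inv X = Y"
proof -
  have "invertible X"
    using assms invertible_right_inverse by blast
  then have "matrix_inv X = matrix_inv X ** (X ** Y)"
    by (simp add: assms)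
  also have "\<dots> = Y"
    by (simp add: matrix_mul_assoc matrix_inv_left \<open>invertible X\<close>)
  finally show ?thesis .
qed

lemma cmat_cnj_matrix_inv:
  fixes X :: "complex^'n^'n"
  shows "invertible X \<Longrightarrow> matrix_inv (cmat_cnj X) = cmat_cnj (matrix_inv X)"
  by (rule matrix_inv_unique) (metis cmat_cnj_mult cmat_cnj_mat1 matrix_inv_right)

lemma mat1_neq_zero: "(mat 1 :: 'a::semiring_1^'n^'n) \<noteq> 0"
proof
  assume "(mat 1 :: 'a^'n^'n) = 0"
  then have "(mat 1 :: 'a^'n^'n) $ undefined $ undefined = 0"
    by simp
  then show False
    by (simp add: mat_def)
qed

lemma not_invertible_zero: "\<not> invertible (0 :: 'a::semiring_1^'n^'n)"
  unfolding invertible_def using mat1_neq_zero by (metis times0_left)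

lemma matrix_inv_not_invertible:
  fixes X :: "'a::semiring_1^'n^'n"
  assumes "\<not> invertible X"
  shows "matrix_inv X = matrix_inv 0"
proof -
  have "\<not> (X ** Y = mat 1 \<and> Y ** X = mat 1)" "\<not> ((0::'a^'n^'n) ** Y = mat 1 \<and> Y ** 0 = mat 1)" for Y
    using assms not_invertible_zero unfolding invertible_def by blast+
  then show ?thesis
    unfolding matrix_inv_def by metis
qed

lemma invertible_mat1_add:
  fixes N :: "'a::real_normed_field^'n^'n"
  assumes "norm N < 1"
  shows "invertible (mat 1 + N)"
proof -
  have "v = 0" if "(mat 1 + N) *v v = 0" for v
  proof -
    have "v + N *v v = 0"
      using that by (simp add: matrix_vector_mult_add_rdistrib)
    then have "norm v = norm (N *v v)"
      by (metis add_eq_0_iff norm_minus_cancel)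
    also have "\<dots> \<le> norm N * norm v"
      by (rule norm_matrix_vector_mult_le)
    finally have "(1 - norm N) * norm v \<le> 0"
      by (simp add: algebra_simps)
    with assms show "v = 0"
      by (simp add: mult_le_0_iff)
  qed
  then show ?thesis
    using matrix_left_invertible_ker invertible_left_inverse by blast
qed

lemma matrix_inv_resolvent:
  fixes X Y :: "'a::field^'n^'n"
  assumes "invertible X" "invertible Y"
  shows "matrix_inv X - matrix_inv Y = matrix_inv X ** (Y - X) ** matrix_inv Y"
proof -
  have "matrix_inv X ** (Y - X) ** matrix_inv Y
      = matrix_inv X ** (Y ** matrix_inv Y) - (matrix_inv X ** X) ** matrix_inv Y"
    by (simp add: matrix_diff_ldistrib matrix_diff_rdistrib matrix_mul_assoc)
  then show ?thesis
    by (simp add: matrix_inv_right matrix_inv_left assms)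
qed

text \<open>Writing \<open>X + P = X (1 + X\<^sup>-\<^sup>1 P)\<close>, the resolvent identity gives both the bound on
  \<open>(X + P)\<^sup>-\<^sup>1\<close> and the second-order expansion of the inverse.\<close>
lemma matrix_inv_perturb:
  fixes X P :: "'a::real_normed_field^'n^'n"
  assumes inv: "invertible X" and small: "norm (matrix_inv X ** P) \<le> 1/2"
  shows "invertible (X + P)"
    and "norm (matrix_inv (X + P)) \<le> 2 * norm (matrix_inv X)"
    and "matrix_inv (X + P) - matrix_inv X + matrix_inv X ** P ** matrix_inv X
           = matrix_inv X ** P ** matrix_inv X ** P ** matrix_inv (X + P)"
proof -
  let ?Xi = "matrix_inv X" and ?Z = "matrix_inv (X + P)"
  have "invertible (mat 1 + ?Xi ** P)"
    using small by (intro invertible_mat1_add) simp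
  moreover have "X + P = X ** (mat 1 + ?Xi ** P)"
    by (simp add: matrix_add_ldistrib matrix_mul_assoc matrix_inv_right[OF inv])
  ultimately show invXP: "invertible (X + P)"
    using invertible_mult[OF inv] by metis
  have resolvent: "?Xi - ?Z = ?Xi ** P ** ?Z"
    using matrix_inv_resolvent[OF inv invXP] by simp
  have "norm ?Z = norm (?Xi - ?Xi ** P ** ?Z)"
    by (simp add: resolvent[symmetric])
  also have "\<dots> \<le> norm ?Xi + norm (?Xi ** P) * norm ?Z"
    using norm_triangle_ineq4 norm_matrix_mult_le by (rule order_trans[OF _ add_left_mono])
  also have "\<dots> \<le> norm ?Xi + 1/2 * norm ?Z"
    by (intro add_left_mono mult_right_mono small) simp
  finally show "norm ?Z \<le> 2 * norm ?Xi"
    by simp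
  have "?Z - ?Xi + ?Xi ** P ** ?Xi = ?Xi ** P ** (?Xi - ?Z)"
    by (simp add: matrix_diff_ldistrib resolvent[symmetric])
  then show "?Z - ?Xi + ?Xi ** P ** ?Xi = ?Xi ** P ** ?Xi ** P ** ?Z"
    by (simp only: resolvent matrix_mul_assoc)
qed

definition adjugate :: "'a::comm_ring_1^'n^'n \<Rightarrow> 'a^'n^'n" where
  "adjugate X = (\<chi> k j. det (\<chi> i l. if l = k then mat 1 $ i $ j else X $ i $ l))"

lemma matrix_inv_adjugate:
  fixes X :: "complex^'n^'n"
  assumes d: "det X \<noteq> 0"
  shows "matrix_inv X = csmult (inverse (det X)) (adjugate X)"
proof -
  have inv: "invertible X"
    using d invertible_det_nz by blast
  have "matrix_inv X $ k $ j = det (\<chi> i l. if l = k then mat 1 $ i $ j else X $ i $ l) / det X" for k j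
  proof -
    have "X *v (\<chi> k. matrix_inv X $ k $ j) = (\<chi> i. mat 1 $ i $ j)"
      using matrix_inv_right[OF inv]
      by (simp add: matrix_vector_mult_def matrix_matrix_mult_def vec_eq_iff)
    from iffD1[OF cramer[OF d] this]
    have "(\<chi> k. matrix_inv X $ k $ j) $ k = det (\<chi> i l. if l = k then (\<chi> i. mat 1 $ i $ j) $ i else X $ i $ l) / det X"
      by simp
    then show ?thesis
      by (simp cong: if_cong)
  qed
  then show ?thesis
    by (simp add: vec_eq_iff csmult_def adjugate_def divide_inverse mult.commute)
qed

lemma continuous_on_adjugate: "continuous_on UNIV (adjugate :: complex^'n^'n \<Rightarrow> _)"
proof -
  have det: "continuous_on UNIV (det :: complex^'n^'n \<Rightarrow> _)"
    unfolding det_def by (intro continuous_intros)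
  have entry: "continuous_on UNIV (\<lambda>X::complex^'n^'n. if l = k then c else X $ i $ l)" for i l k c
    by (cases "l = k") (auto intro!: continuous_intros)
  have "continuous_on UNIV (\<lambda>X::complex^'n^'n. \<chi> i l. if l = k then mat 1 $ i $ j else X $ i $ l)" for k j
    by (intro continuous_on_vec_lambda entry)
  then have cofactor: "continuous_on UNIV
      (\<lambda>X::complex^'n^'n. det (\<chi> i l. if l = k then mat 1 $ i $ j else X $ i $ l))" for k j
    by (rule continuous_on_compose2[OF det]) auto
  show ?thesis
    unfolding adjugate_def[abs_def] by (intro continuous_on_vec_lambda) (rule cofactor)
qed

lemma borel_measurable_matrix_mult [measurable (raw)]:
  fixes F :: "'p \<Rightarrow> complex^'k^'m" and G :: "'p \<Rightarrow> complex^'n^'k"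
  assumes "F \<in> borel_measurable M" "G \<in> borel_measurable M"
  shows "(\<lambda>p. F p ** G p) \<in> borel_measurable M"
  by (rule borel_measurable_continuous_Pair[OF assms, of "(**)"])
     (unfold matrix_matrix_mult_def, intro continuous_intros)

lemma borel_measurable_csmult [measurable (raw)]:
  fixes F :: "'p \<Rightarrow> complex^'n^'m"
  assumes "c \<in> borel_measurable M" "F \<in> borel_measurable M"
  shows "(\<lambda>p. csmult (c p) (F p)) \<in> borel_measurable M"
  by (rule borel_measurable_continuous_Pair[OF assms, of csmult])
     (unfold csmult_def, intro continuous_intros)

lemma borel_measurable_cmat_adj [measurable (raw)]:
  fixes F :: "'p \<Rightarrow> complex^'n^'m"
  assumes "F \<in> borel_measurable M"
  shows "(\<lambda>p. cmat_adj (F p)) \<in> borel_measurable M"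
  by (rule borel_measurable_continuous_on[OF _ assms])
     (unfold cmat_adj_def, intro continuous_intros)

lemma borel_measurable_cmat_cnj [measurable (raw)]:
  fixes F :: "'p \<Rightarrow> complex^'n^'m"
  assumes "F \<in> borel_measurable M"
  shows "(\<lambda>p. cmat_cnj (F p)) \<in> borel_measurable M"
  by (rule borel_measurable_continuous_on[OF _ assms])
     (unfold cmat_cnj_def, intro continuous_intros)

lemma borel_measurable_matrix_inv_borel: "(matrix_inv :: complex^'n^'n \<Rightarrow> _) \<in> borel_measurable borel"
proof -
  have eq: "matrix_inv = (\<lambda>X::complex^'n^'n.
              if det X = 0 then matrix_inv 0 else csmult (inverse (det X)) (adjugate X))"
    by (auto simp: fun_eq_iff matrix_inv_adjugate invertible_det_nz intro: matrix_inv_not_invertible)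
  have [measurable]: "(det :: complex^'n^'n \<Rightarrow> _) \<in> borel_measurable borel"
    unfolding det_def by (intro borel_measurable_continuous_onI continuous_intros)
  have [measurable]: "(adjugate :: complex^'n^'n \<Rightarrow> _) \<in> borel_measurable borel"
    by (rule borel_measurable_continuous_onI[OF continuous_on_adjugate])
  have "(\<lambda>X::complex^'n^'n. if det X = 0 then matrix_inv 0 else csmult (inverse (det X)) (adjugate X))
          \<in> borel_measurable borel"
    by measurable
  then show ?thesis
    by (subst eq)
qed

lemma borel_measurable_matrix_inv [measurable (raw)]:
  fixes F :: "'p \<Rightarrow> complex^'n^'n"
  assumes "F \<in> borel_measurable M"
  shows "(\<lambda>p. matrix_inv (F p)) \<in> borel_measurable M"
  using measurable_compose[OF assms borel_measurable_matrix_inv_borel] by (simp add: comp_def)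

lemma borel_measurable_pmat:
  assumes "\<And>i. f i \<in> borel_measurable M"
  shows "pmat f X \<in> borel_measurable M"
  unfolding pmat_def[abs_def] by (intro borel_measurable_sum borel_measurable_csmult assms) simp

lemma borel_measurable_xhat:
  fixes A :: "'q::finite \<Rightarrow> real^'n^'n"
  assumes "\<And>i. alpha i \<in> borel_measurable M" "\<And>j. beta j \<in> borel_measurable M"
  shows "xhat alpha beta A B \<in> borel_measurable M"
  unfolding xhat_def[abs_def]
  by (intro borel_measurable_matrix_mult borel_measurable_matrix_inv borel_measurable_pmat assms)

lemma borel_measurable_yhat:
  fixes A :: "'q::finite \<Rightarrow> real^'n^'n"
  assumes "\<And>i. alpha i \<in> borel_measurable M" "\<And>j. beta j \<in> borel_measurable M"
    and "\<And>k. gamma k \<in> borel_measurable M"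
  shows "yhat alpha beta gamma A B C \<in> borel_measurable M"
  unfolding yhat_def[abs_def]
  by (intro borel_measurable_matrix_mult borel_measurable_xhat borel_measurable_pmat assms)

lemma pmat_fun_upd: "pmat f (X(i := H)) p = pmat f X p + csmult (f i p) (cmat_of_real (H - X i))"
proof -
  have "pmat f (X(i := H)) p = pmat f X p - csmult (f i p) (cmat_of_real (X i)) + csmult (f i p) (cmat_of_real H)"
    unfolding pmat_def by (simp add: sum.remove[of UNIV i] algebra_simps)
  then show ?thesis
    by (simp add: cmat_of_real_diff csmult_diff)
qed

lemma pmat_cnj: "(\<And>i. f i q = cnj (f i p)) \<Longrightarrow> pmat f X q = cmat_cnj (pmat f X p)"
  by (simp add: pmat_def cmat_cnj_sum cmat_cnj_csmult)

definition coeff_norm :: "('q::finite \<Rightarrow> 'p \<Rightarrow> complex) \<Rightarrow> 'p \<Rightarrow> real" where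
  "coeff_norm f p = (\<Sum>i\<in>UNIV. cmod (f i p))"

lemma coeff_norm_nonneg: "0 \<le> coeff_norm f p"
  by (simp add: coeff_norm_def sum_nonneg)

lemma norm_pmat_le: "norm (pmat f X p) \<le> coeff_norm f p * (\<Sum>i\<in>UNIV. norm (X i))"
proof -
  have "norm (pmat f X p) \<le> (\<Sum>i\<in>UNIV. cmod (f i p) * norm (X i))"
    unfolding pmat_def by (rule order.trans[OF norm_sum]) (simp add: norm_csmult norm_cmat_of_real)
  also have "\<dots> \<le> (\<Sum>i\<in>UNIV. cmod (f i p) * (\<Sum>i\<in>UNIV. norm (X i)))"
    by (intro sum_mono mult_left_mono member_le_sum) auto
  finally show ?thesis
    by (simp add: coeff_norm_def sum_distrib_right)
qed

lemma coeff_norm_pos: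
  fixes X :: "'q::finite \<Rightarrow> real^'n^'n"
  assumes "invertible (pmat f X p)"
  shows "0 < coeff_norm f p"
proof (rule ccontr)
  assume "\<not> 0 < coeff_norm f p"
  then have "\<forall>i\<in>UNIV. cmod (f i p) = 0"
    using coeff_norm_nonneg[of f p] unfolding coeff_norm_def
    by (subst sum_nonneg_eq_0_iff[symmetric]) auto
  then have "pmat f X p = 0"
    by (simp add: pmat_def)
  then show False
    using assms not_invertible_zero by metis
qed

section \<open>Differentiability of a mean-square misfit\<close>

lemma has_derivative_at_quadratic_remainder:
  fixes f :: "'a::real_normed_vector \<Rightarrow> 'b::real_normed_vector"
  assumes L: "bounded_linear L" and d: "0 < d"
    and remainder: "\<And>k. norm k < d \<Longrightarrow> norm (f (x + k) - f x - L k) \<le> c * (norm k)\<^sup>2"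
  shows "(f has_derivative L) (at x)"
proof -
  have "norm (norm (f (x + k) - f x - L k) / norm k) \<le> c * norm k" if "k \<noteq> 0" "norm k < d" for k
  proof -
    have "norm (f (x + k) - f x - L k) / norm k \<le> c * (norm k)\<^sup>2 / norm k"
      using remainder[OF that(2)] by (simp add: divide_right_mono)
    then show ?thesis
      using that(1) by (simp add: power2_eq_square)
  qed
  then have "\<forall>\<^sub>F k in at 0. norm (norm (f (x + k) - f x - L k) / norm k) \<le> c * norm k"
    unfolding eventually_at using d by (auto simp: dist_norm intro!: exI[of _ d])
  moreover have "((\<lambda>k. c * norm k) \<longlongrightarrow> 0) (at 0)"
    by (auto intro!: tendsto_eq_intros)
  ultimately have "(\<lambda>k. norm (f (x + k) - f x - L k) / norm k) \<midarrow>0\<rightarrow> 0"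
    by (rule Lim_null_comparison)
  then show ?thesis
    unfolding has_derivative_at using L by simp
qed

lemma power2_norm_diff_expansion_le:
  fixes E D T :: "'w::real_inner"
  assumes r: "norm (D - T) \<le> g * n\<^sup>2" and t: "norm T \<le> g * n"
    and g: "0 \<le> g" and n: "0 \<le> n" "n \<le> 1"
  shows "\<bar>(norm (E - D))\<^sup>2 - (norm E)\<^sup>2 + 2 * inner E T\<bar> \<le> 5 * n\<^sup>2 * ((norm E)\<^sup>2 + g\<^sup>2)"
    and "(norm (E - D))\<^sup>2 \<le> 8 * ((norm E)\<^sup>2 + g\<^sup>2)"
proof -
  have "norm D \<le> g * n\<^sup>2 + g * n"
    using r t norm_triangle_sub[of D T] by simp
  also have "g * n\<^sup>2 \<le> g * n"
    using g n by (simp add: mult_left_mono power2_eq_square mult_left_le)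
  finally have "norm D \<le> 2 * g * n"
    by simp
  then have D2: "(norm D)\<^sup>2 \<le> 4 * g\<^sup>2 * n\<^sup>2"
    using power_mono[of "norm D" "2 * g * n" 2] by (simp add: power_mult_distrib)
  have "(norm (E - D))\<^sup>2 - (norm E)\<^sup>2 + 2 * inner E T = (norm D)\<^sup>2 - 2 * inner E (D - T)"
    by (simp add: power2_norm_eq_inner inner_diff_left inner_diff_right inner_commute)
  then have "\<bar>(norm (E - D))\<^sup>2 - (norm E)\<^sup>2 + 2 * inner E T\<bar> \<le> (norm D)\<^sup>2 + 2 * \<bar>inner E (D - T)\<bar>"
    using abs_triangle_ineq4[of "(norm D)\<^sup>2" "2 * inner E (D - T)"] by simp
  also have "\<bar>inner E (D - T)\<bar> \<le> n\<^sup>2 * (norm E * g)"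
    using Cauchy_Schwarz_ineq2[of E "D - T"] mult_left_mono[OF r norm_ge_zero[of E]]
    by (simp add: ac_simps)
  also have "2 * (n\<^sup>2 * (norm E * g)) \<le> n\<^sup>2 * ((norm E)\<^sup>2 + g\<^sup>2)"
    using mult_left_mono[OF sum_squares_bound[of "norm E" g] zero_le_power2[of n]]
    by (simp add: ac_simps)
  finally have "\<bar>(norm (E - D))\<^sup>2 - (norm E)\<^sup>2 + 2 * inner E T\<bar> \<le> 4 * g\<^sup>2 * n\<^sup>2 + n\<^sup>2 * ((norm E)\<^sup>2 + g\<^sup>2)"
    using D2 by linarith
  also have "\<dots> \<le> 5 * n\<^sup>2 * ((norm E)\<^sup>2 + g\<^sup>2)"
    by (simp add: algebra_simps)
  finally show "\<bar>(norm (E - D))\<^sup>2 - (norm E)\<^sup>2 + 2 * inner E T\<bar> \<le> 5 * n\<^sup>2 * ((norm E)\<^sup>2 + g\<^sup>2)" .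
  have "(norm (E - D))\<^sup>2 \<le> (norm E + norm D)\<^sup>2"
    by (intro power_mono norm_triangle_ineq4) simp
  also have "\<dots> \<le> 2 * (norm E)\<^sup>2 + 2 * (norm D)\<^sup>2"
    using sum_squares_bound[of "norm E" "norm D"] by (simp add: power2_sum)
  also have "\<dots> \<le> 2 * (norm E)\<^sup>2 + 8 * g\<^sup>2"
    using D2 n mult_left_le[of "n\<^sup>2" "4 * g\<^sup>2"] by (simp add: power_le_one)
  finally show "(norm (E - D))\<^sup>2 \<le> 8 * ((norm E)\<^sup>2 + g\<^sup>2)"
    using zero_le_power2[of "norm E"] by (simp only: distrib_left)
qed

lemma abs_integral_le_AE:
  fixes f g :: "'a \<Rightarrow> real"
  assumes "integrable M f" "integrable M g" "AE x in M. \<bar>f x\<bar> \<le> g x"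
  shows "\<bar>\<integral>x. f x \<partial>M\<bar> \<le> (\<integral>x. g x \<partial>M)"
proof -
  have "\<bar>\<integral>x. f x \<partial>M\<bar> \<le> (\<integral>x. \<bar>f x\<bar> \<partial>M)"
    using integral_norm_bound[of M f] by simp
  also have "\<dots> \<le> (\<integral>x. g x \<partial>M)"
    using assms by (intro integral_mono_AE) auto
  finally show ?thesis .
qed

lemma
  fixes E :: "'p \<Rightarrow> 'w::{real_inner, second_countable_topology}"
    and T :: "'p \<Rightarrow> 'v::real_normed_vector \<Rightarrow> 'w"
  assumes h: "integrable M h" and Em: "E \<in> borel_measurable M"
    and Tm: "\<And>K. (\<lambda>p. T p K) \<in> borel_measurable M" and Tlin: "\<And>p. linear (T p)"
    and bound: "AE p in M. \<forall>K. \<bar>inner (E p) (T p K)\<bar> \<le> norm K * h p"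
  shows integrable_inner_dominated: "integrable M (\<lambda>p. inner (E p) (T p K))"
    and bounded_linear_integral_inner: "bounded_linear (\<lambda>K. \<integral>p. inner (E p) (T p K) \<partial>M)"
proof -
  show int: "integrable M (\<lambda>p. inner (E p) (T p K))" for K
    by (rule Bochner_Integration.integrable_bound[where f="\<lambda>p. norm K * h p"])
       (use h Em Tm bound in \<open>auto elim!: eventually_mono intro: order_trans[OF _ abs_ge_self]\<close>)
  show "bounded_linear (\<lambda>K. \<integral>p. inner (E p) (T p K) \<partial>M)"
  proof (rule bounded_linear_intro[where K="\<integral>p. h p \<partial>M"])
    show "(\<integral>p. inner (E p) (T p (a + b)) \<partial>M) = (\<integral>p. inner (E p) (T p a) \<partial>M) + (\<integral>p. inner (E p) (T p b) \<partial>M)"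
      for a b
      using int by (simp add: linear_add[OF Tlin] inner_add_right)
    show "(\<integral>p. inner (E p) (T p (r *\<^sub>R a)) \<partial>M) = r *\<^sub>R (\<integral>p. inner (E p) (T p a) \<partial>M)" for r a
      by (simp add: linear_scale[OF Tlin])
    show "norm (\<integral>p. inner (E p) (T p K) \<partial>M) \<le> norm K * (\<integral>p. h p \<partial>M)" for K
    proof -
      have "AE p in M. \<bar>inner (E p) (T p K)\<bar> \<le> norm K * h p"
        using bound by (auto elim!: eventually_mono)
      then show ?thesis
        using abs_integral_le_AE[OF int integrable_mult_right[OF h]] by simp
    qed
  qed
qed

lemma integral_misfit_remainder_le:
  fixes E D T :: "'p \<Rightarrow> 'w::euclidean_space"
  assumes [measurable]: "E \<in> borel_measurable M" "D \<in> borel_measurable M" "g \<in> borel_measurable M"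
    and EL2: "integrable M (\<lambda>p. (norm (E p))\<^sup>2)" and gL2: "integrable M (\<lambda>p. (g p)\<^sup>2)"
    and g: "\<And>p. 0 \<le> g p" and n: "0 \<le> n" "n \<le> 1"
    and int_inner: "integrable M (\<lambda>p. inner (E p) (T p))"
    and bounds: "AE p in M. norm (D p - T p) \<le> g p * n\<^sup>2 \<and> norm (T p) \<le> g p * n"
  shows "\<bar>(\<integral>p. (norm (E p - D p))\<^sup>2 \<partial>M) - (\<integral>p. (norm (E p))\<^sup>2 \<partial>M) + 2 * (\<integral>p. inner (E p) (T p) \<partial>M)\<bar>
           \<le> 5 * n\<^sup>2 * (\<integral>p. (norm (E p))\<^sup>2 + (g p)\<^sup>2 \<partial>M)"
proof -
  let ?h = "\<lambda>p. (norm (E p))\<^sup>2 + (g p)\<^sup>2"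
  have h: "integrable M ?h"
    using EL2 gL2 by simp
  have expansion: "AE p in M. \<bar>(norm (E p - D p))\<^sup>2 - (norm (E p))\<^sup>2 + 2 * inner (E p) (T p)\<bar> \<le> 5 * n\<^sup>2 * ?h p
                         \<and> (norm (E p - D p))\<^sup>2 \<le> 8 * ?h p"
    using bounds by eventually_elim (use power2_norm_diff_expansion_le g n in blast)
  have int_diff: "integrable M (\<lambda>p. (norm (E p - D p))\<^sup>2)"
    by (rule Bochner_Integration.integrable_bound[OF integrable_mult_right[OF h, of 8]])
       (use expansion in \<open>auto elim!: eventually_mono\<close>)
  have "(\<integral>p. (norm (E p - D p))\<^sup>2 \<partial>M) - (\<integral>p. (norm (E p))\<^sup>2 \<partial>M) + 2 * (\<integral>p. inner (E p) (T p) \<partial>M)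
      = (\<integral>p. (norm (E p - D p))\<^sup>2 - (norm (E p))\<^sup>2 + 2 * inner (E p) (T p) \<partial>M)"
    using int_diff EL2 int_inner by simp
  also have "\<bar>\<dots>\<bar> \<le> (\<integral>p. 5 * n\<^sup>2 * ?h p \<partial>M)"
    using int_diff EL2 int_inner h expansion
    by (intro abs_integral_le_AE) (auto elim!: eventually_mono)
  finally show ?thesis
    by simp
qed

lemma abs_inner_le_power2_sum:
  fixes E T :: "'a::real_inner"
  assumes "norm T \<le> g * k" "0 \<le> g" "0 \<le> k"
  shows "\<bar>inner E T\<bar> \<le> k * ((norm E)\<^sup>2 + g\<^sup>2)"
proof -
  have "\<bar>inner E T\<bar> \<le> norm E * g * k"
    using Cauchy_Schwarz_ineq2[of E T] mult_left_mono[OF assms(1) norm_ge_zero[of E]] by (simp add: ac_simps)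
  also have "norm E * g \<le> (norm E)\<^sup>2 + g\<^sup>2"
    using sum_squares_bound[of "norm E" g] mult_nonneg_nonneg[OF norm_ge_zero[of E] assms(2)] by linarith
  then have "norm E * g * k \<le> ((norm E)\<^sup>2 + g\<^sup>2) * k"
    using assms(3) by (rule mult_right_mono)
  finally show ?thesis
    by (simp add: ac_simps)
qed

lemma has_derivative_integral_misfit:
  fixes Y :: "'v::real_normed_vector \<Rightarrow> 'p \<Rightarrow> 'w::euclidean_space" and T :: "'p \<Rightarrow> 'v \<Rightarrow> 'w"
  assumes Ym: "\<And>H. Y H \<in> borel_measurable M" and ym: "y \<in> borel_measurable M"
    and EL2: "integrable M (\<lambda>p. (norm (y p - Y H0 p))\<^sup>2)"
    and gm: "g \<in> borel_measurable M" and gL2: "integrable M (\<lambda>p. (g p)\<^sup>2)" and g: "\<And>p. 0 \<le> g p"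
    and Tm: "\<And>K. (\<lambda>p. T p K) \<in> borel_measurable M" and Tlin: "\<And>p. linear (T p)"
    and Tbd: "AE p in M. \<forall>K. norm (T p K) \<le> g p * norm K"
    and d: "0 < d"
    and remainder: "AE p in M. \<forall>H. norm (H - H0) < d \<longrightarrow>
                      norm (Y H p - Y H0 p - T p (H - H0)) \<le> g p * (norm (H - H0))\<^sup>2"
  shows "((\<lambda>H. \<integral>p. (norm (y p - Y H p))\<^sup>2 \<partial>M) has_derivative
           (\<lambda>K. -2 * (\<integral>p. inner (y p - Y H0 p) (T p K) \<partial>M))) (at H0)"
proof -
  let ?E = "\<lambda>p. y p - Y H0 p"
  let ?h = "\<lambda>p. (norm (?E p))\<^sup>2 + (g p)\<^sup>2"
  have Em: "?E \<in> borel_measurable M"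
    using ym Ym by measurable
  have "AE p in M. \<forall>K. \<bar>inner (?E p) (T p K)\<bar> \<le> norm K * ?h p"
    using Tbd by eventually_elim (blast intro: abs_inner_le_power2_sum g norm_ge_zero)
  note inner = integrable_inner_dominated[OF _ Em Tm Tlin this] bounded_linear_integral_inner[OF _ Em Tm Tlin this]
  have "norm ((\<integral>p. (norm (y p - Y (H0 + k) p))\<^sup>2 \<partial>M) - (\<integral>p. (norm (y p - Y H0 p))\<^sup>2 \<partial>M)
               - -2 * (\<integral>p. inner (y p - Y H0 p) (T p k) \<partial>M))
        \<le> (5 * (\<integral>p. ?h p \<partial>M)) * (norm k)\<^sup>2" if k: "norm k < min d 1" for k
  proof -
    have "AE p in M. norm ((Y (H0 + k) p - Y H0 p) - T p k) \<le> g p * (norm k)\<^sup>2 \<and> norm (T p k) \<le> g p * norm k"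
      using remainder Tbd
    proof eventually_elim
      case (elim p)
      then show ?case
        using spec[OF elim(1), of "H0 + k"] k by simp
    qed
    from integral_misfit_remainder_le[OF Em _ gm EL2 gL2 g _ _ inner(1) this]
    show ?thesis
      using k ym Ym EL2 gL2 by (simp add: algebra_simps)
  qed
  then show ?thesis
    using gL2 EL2 d
    by (intro has_derivative_at_quadratic_remainder[where d="min d 1"] bounded_linear_const_mult inner(2)) auto
qed

lemma integrable_adj_sandwich:
  fixes U :: "'p \<Rightarrow> complex^'d^'m" and R :: "'p \<Rightarrow> complex^'n^'m" and V :: "'p \<Rightarrow> complex^'n^'c"
  assumes "U \<in> borel_measurable M" "R \<in> borel_measurable M" "V \<in> borel_measurable M"
    and "integrable M (\<lambda>p. (g p)\<^sup>2)" "integrable M (\<lambda>p. (norm (R p))\<^sup>2)"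
    and UV: "AE p in M. norm (U p) * norm (V p) \<le> g p"
  shows "integrable M (\<lambda>p. cmat_adj (U p) ** R p ** cmat_adj (V p))"
proof (rule Bochner_Integration.integrable_bound)
  show "integrable M (\<lambda>p. (g p)\<^sup>2 + (norm (R p))\<^sup>2)"
    using assms by simp
  show "(\<lambda>p. cmat_adj (U p) ** R p ** cmat_adj (V p)) \<in> borel_measurable M"
    using assms by measurable
  show "AE p in M. norm (cmat_adj (U p) ** R p ** cmat_adj (V p)) \<le> norm ((g p)\<^sup>2 + (norm (R p))\<^sup>2)"
    using UV
  proof eventually_elim
    case (elim p)
    have "norm (cmat_adj (U p) ** R p ** cmat_adj (V p)) \<le> norm (U p) * norm (V p) * norm (R p)"
      using norm_matrix_mult_le_mult[OF norm_matrix_mult_le order_refl, of "cmat_adj (U p)" "R p" "cmat_adj (V p)"]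
      by (simp add: norm_cmat_adj ac_simps)
    also have "\<dots> \<le> g p * norm (R p)"
      using mult_right_mono[OF elim norm_ge_zero[of "R p"]] .
    also have "\<dots> \<le> (g p)\<^sup>2 + (norm (R p))\<^sup>2"
      using sum_squares_bound[of "g p" "norm (R p)"] elim
        mult_right_mono[OF order_trans[OF mult_nonneg_nonneg[OF norm_ge_zero norm_ge_zero] elim] norm_ge_zero[of "R p"]]
      by (simp add: power2_eq_square)
    finally show ?case
      by simp
  qed
qed

section \<open>Gradients over a conjugation-invariant measure\<close>

locale cnj_invariant_measure =
  fixes \<mu> :: "(complex^'np) measure"
  assumes cnj_space: "\<forall>p\<in>space \<mu>. cvec_cnj p \<in> space \<mu>"
    and cnj_sets: "\<forall>S\<in>sets \<mu>. cvec_cnj ` S \<in> sets \<mu>"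
    and cnj_emeasure: "\<forall>S\<in>sets \<mu>. emeasure \<mu> (cvec_cnj ` S) = emeasure \<mu> S"
begin

lemma vimage_cvec_cnj: "S \<in> sets \<mu> \<Longrightarrow> cvec_cnj -` S \<inter> space \<mu> = cvec_cnj ` S"
  using cnj_space sets.sets_into_space by (force intro: image_eqI[of _ cvec_cnj, OF cvec_cnj_cnj[symmetric]])

lemma measurable_cvec_cnj: "cvec_cnj \<in> measurable \<mu> \<mu>"
  using cnj_space cnj_sets vimage_cvec_cnj by (auto intro: measurableI)

lemma distr_cvec_cnj: "distr \<mu> \<mu> cvec_cnj = \<mu>"
  by (rule measure_eqI) (simp_all add: emeasure_distr[OF measurable_cvec_cnj] vimage_cvec_cnj cnj_emeasure)

lemma integral_cvec_cnj:
  fixes f :: "complex^'np \<Rightarrow> 'b::{banach, second_countable_topology}"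
  assumes "f \<in> borel_measurable \<mu>"
  shows "(\<integral>p. f (cvec_cnj p) \<partial>\<mu>) = (\<integral>p. f p \<partial>\<mu>)"
  using integral_distr[OF measurable_cvec_cnj assms] distr_cvec_cnj by simp

lemma cmat_cnj_integral_eq:
  fixes F :: "complex^'np \<Rightarrow> complex^'n^'m"
  assumes F: "integrable \<mu> F" and sym: "AE p in \<mu>. F (cvec_cnj p) = cmat_cnj (F p)"
  shows "cmat_cnj (\<integral>p. F p \<partial>\<mu>) = (\<integral>p. F p \<partial>\<mu>)"
proof -
  have Fm: "F \<in> borel_measurable \<mu>"
    using F by simp
  have "(\<integral>p. F p \<partial>\<mu>) = (\<integral>p. F (cvec_cnj p) \<partial>\<mu>)"
    by (rule integral_cvec_cnj[OF Fm, symmetric])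
  also have "\<dots> = (\<integral>p. cmat_cnj (F p) \<partial>\<mu>)"
    using measurable_compose[OF measurable_cvec_cnj Fm] Fm sym
    by (intro integral_cong_AE) (simp_all add: comp_def)
  also have "\<dots> = cmat_cnj (\<integral>p. F p \<partial>\<mu>)"
    by (rule integral_bounded_linear[OF bounded_linear_cmat_cnj F])
  finally show ?thesis
    by simp
qed

lemma cnj_symmetric_integral_real:
  fixes I :: "complex^'np \<Rightarrow> complex^'n^'m"
  assumes I: "integrable \<mu> I" and sym: "AE p in \<mu>. I (cvec_cnj p) = cmat_cnj (I p)"
  shows "\<exists>G. cmat_of_real G = (\<integral>p. I p \<partial>\<mu>) \<and> (\<forall>K. G \<bullet> K = (\<integral>p. inner (I p) (cmat_of_real K) \<partial>\<mu>))"
proof -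
  define S where "S = (\<integral>p. I p \<partial>\<mu>)"
  have "cmat_cnj S = S"
    unfolding S_def by (rule cmat_cnj_integral_eq[OF I sym])
  then have S_real: "cmat_of_real (\<chi> a b. Re (S$a$b)) = S"
    by (rule cmat_of_real_Re_eq)
  moreover have "(\<chi> a b. Re (S$a$b)) \<bullet> K = (\<integral>p. inner (I p) (cmat_of_real K) \<partial>\<mu>)" for K
  proof -
    have "(\<chi> a b. Re (S$a$b)) \<bullet> K = inner S (cmat_of_real K)"
      by (simp only: inner_cmat_of_real[symmetric] S_real)
    then show ?thesis
      unfolding S_def using I by simp
  qed
  ultimately show ?thesis
    unfolding S_def by blast
qed

lemma has_derivative_misfit_gradient:
  fixes Y :: "real^'c^'d \<Rightarrow> complex^'np \<Rightarrow> complex^'nf^'no" and y :: "complex^'np \<Rightarrow> complex^'nf^'no"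
    and U :: "complex^'np \<Rightarrow> complex^'d^'no" and V :: "complex^'np \<Rightarrow> complex^'nf^'c"
  assumes Ym: "\<And>H. Y H \<in> borel_measurable \<mu>" and ym: "y \<in> borel_measurable \<mu>"
    and EL2: "integrable \<mu> (\<lambda>p. (norm (y p - Y H0 p))\<^sup>2)"
    and gm: "g \<in> borel_measurable \<mu>" and gL2: "integrable \<mu> (\<lambda>p. (g p)\<^sup>2)" and g: "\<And>p. 0 \<le> g p"
    and Um: "U \<in> borel_measurable \<mu>" and Vm: "V \<in> borel_measurable \<mu>"
    and UV: "AE p in \<mu>. norm (U p) * norm (V p) \<le> g p"
    and d: "0 < d"
    and remainder: "AE p in \<mu>. \<forall>H. norm (H - H0) < d \<longrightarrow>
          norm (Y H p - Y H0 p - U p ** cmat_of_real (H - H0) ** V p) \<le> g p * (norm (H - H0))\<^sup>2"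
    and sym: "AE p in \<mu>. U (cvec_cnj p) = cmat_cnj (U p) \<and> V (cvec_cnj p) = cmat_cnj (V p)
                         \<and> y (cvec_cnj p) = cmat_cnj (y p) \<and> Y H0 (cvec_cnj p) = cmat_cnj (Y H0 p)"
  shows "\<exists>G. ((\<lambda>H. \<integral>p. (norm (y p - Y H p))\<^sup>2 \<partial>\<mu>) has_derivative (\<lambda>K. G \<bullet> K)) (at H0)
           \<and> cmat_of_real G = csmult 2 (\<integral>p. cmat_adj (U p) ** (Y H0 p - y p) ** cmat_adj (V p) \<partial>\<mu>)"
proof -
  let ?T = "\<lambda>p K. U p ** cmat_of_real K ** V p"
  let ?I = "\<lambda>p. cmat_adj (U p) ** (Y H0 p - y p) ** cmat_adj (V p)"
  have "AE p in \<mu>. \<forall>K. norm (?T p K) \<le> g p * norm K"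
    using UV
  proof (eventually_elim, intro allI)
    case (elim p)
    show "norm (?T p K) \<le> g p * norm K" for K
      using norm_matrix_sandwich_le[of "U p" K "V p"] mult_right_mono[OF elim norm_ge_zero[of K]] by linarith
  qed
  then have deriv: "((\<lambda>H. \<integral>p. (norm (y p - Y H p))\<^sup>2 \<partial>\<mu>) has_derivative
           (\<lambda>K. -2 * (\<integral>p. inner (y p - Y H0 p) (?T p K) \<partial>\<mu>))) (at H0)"
    using Um Vm
    by (intro has_derivative_integral_misfit[OF Ym ym EL2 gm gL2 g _ linear_matrix_sandwich _ d remainder]) simp_all
  have I: "integrable \<mu> ?I"
    using EL2 by (intro integrable_adj_sandwich[OF Um borel_measurable_diff[OF Ym ym] Vm gL2 _ UV])
                 (simp add: norm_minus_commute)
  have "AE p in \<mu>. ?I (cvec_cnj p) = cmat_cnj (?I p)"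
    using sym by eventually_elim (simp add: cmat_cnj_mult cmat_cnj_adj cmat_cnj_diff)
  from cnj_symmetric_integral_real[OF I this] obtain G where
    G: "cmat_of_real G = (\<integral>p. ?I p \<partial>\<mu>)" "\<And>K. G \<bullet> K = (\<integral>p. inner (?I p) (cmat_of_real K) \<partial>\<mu>)"
    by blast
  have "(2 *\<^sub>R G) \<bullet> K = 2 * (\<integral>p. - inner (y p - Y H0 p) (?T p K) \<partial>\<mu>)" for K
    unfolding inner_scaleR_left G(2) by (simp add: inner_matrix_mult_adj flip: inner_minus_left)
  then have "(2 *\<^sub>R G) \<bullet> K = -2 * (\<integral>p. inner (y p - Y H0 p) (?T p K) \<partial>\<mu>)" for K
    by simp
  then have "((\<lambda>H. \<integral>p. (norm (y p - Y H p))\<^sup>2 \<partial>\<mu>) has_derivative (\<lambda>K. (2 *\<^sub>R G) \<bullet> K)) (at H0)"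
    using deriv by presburger
  moreover have "cmat_of_real (2 *\<^sub>R G) = csmult 2 (\<integral>p. ?I p \<partial>\<mu>)"
    using G(1) by (simp add: cmat_of_real_scaleR csmult_def vec_eq_iff complex_eq_iff)
  ultimately show ?thesis
    by blast
qed

end

section \<open>The reduced-order model\<close>

locale reduced_model = cnj_invariant_measure \<mu>
  for \<mu> :: "(complex^'np) measure" +
  fixes y :: "complex^'np \<Rightarrow> complex^'nf^'no"
    and alpha :: "'qa::finite \<Rightarrow> complex^'np \<Rightarrow> complex"
    and beta :: "'qb::finite \<Rightarrow> complex^'np \<Rightarrow> complex"
    and gamma :: "'qc::finite \<Rightarrow> complex^'np \<Rightarrow> complex"
    and A :: "'qa \<Rightarrow> real^'r^'r"
    and B :: "'qb \<Rightarrow> real^'nf^'r"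
    and C :: "'qc \<Rightarrow> real^'r^'no"
  assumes y_meas: "y \<in> borel_measurable \<mu>"
    and y_L2: "(\<integral>\<^sup>+ p. ennreal ((norm (y p))\<^sup>2) \<partial>\<mu>) < \<infinity>"
    and y_cnj: "\<forall>p\<in>space \<mu>. cmat_cnj (y p) = y (cvec_cnj p)"
    and alpha_meas: "\<forall>i. alpha i \<in> borel_measurable \<mu>"
    and beta_meas: "\<forall>j. beta j \<in> borel_measurable \<mu>"
    and gamma_meas: "\<forall>k. gamma k \<in> borel_measurable \<mu>"
    and alpha_cnj: "\<forall>i. \<forall>p\<in>space \<mu>. alpha i (cvec_cnj p) = cnj (alpha i p)"
    and beta_cnj: "\<forall>j. \<forall>p\<in>space \<mu>. beta j (cvec_cnj p) = cnj (beta j p)"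
    and gamma_cnj: "\<forall>k. \<forall>p\<in>space \<mu>. gamma k (cvec_cnj p) = cnj (gamma k p)"
    and ratio_L2: "(\<integral>\<^sup>+ p. (ennreal ((\<Sum>j\<in>UNIV. cmod (beta j p)) * (\<Sum>k\<in>UNIV. cmod (gamma k p)))
                        / ennreal (\<Sum>i\<in>UNIV. cmod (alpha i p)))\<^sup>2 \<partial>\<mu>) < \<infinity>"
    and adm: "admissible \<mu> alpha A"
begin

abbreviation "Ainv p \<equiv> matrix_inv (pmat alpha A p)"
abbreviation "yhat0 \<equiv> yhat alpha beta gamma A B C"

lemma alpha_measurable: "alpha i \<in> borel_measurable \<mu>"
  and beta_measurable: "beta j \<in> borel_measurable \<mu>"
  and gamma_measurable: "gamma k \<in> borel_measurable \<mu>"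
  using alpha_meas beta_meas gamma_meas by blast+

lemma yhat_measurable: "yhat alpha beta gamma A' B' C' \<in> borel_measurable \<mu>"
  for A' :: "'qa \<Rightarrow> real^'r^'r"
  by (intro borel_measurable_yhat alpha_measurable beta_measurable gamma_measurable)

lemma Ainv_measurable: "Ainv \<in> borel_measurable \<mu>"
  by (intro borel_measurable_matrix_inv borel_measurable_pmat alpha_measurable)

definition ratio :: "complex^'np \<Rightarrow> real" where
  "ratio p = coeff_norm beta p * coeff_norm gamma p / coeff_norm alpha p"

lemma ratio_nonneg: "0 \<le> ratio p"
  by (simp add: ratio_def coeff_norm_nonneg)

lemma ratio_measurable: "ratio \<in> borel_measurable \<mu>"
  using alpha_measurable beta_measurable gamma_measurable
  unfolding ratio_def[abs_def] coeff_norm_def by measurable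

definition inv_bound :: "'qa \<Rightarrow> real" where
  "inv_bound i = max 0 (real_of_ereal
     (esssup \<mu> (\<lambda>p. ereal (norm (csmult (alpha i p) (matrix_inv (pmat alpha A p)))))))"

lemma inv_bound_nonneg: "0 \<le> inv_bound i"
  by (simp add: inv_bound_def)

lemma AE_inv_bound: "AE p in \<mu>. cmod (alpha i p) * norm (Ainv p) \<le> inv_bound i"
proof -
  let ?f = "\<lambda>p. ereal (norm (csmult (alpha i p) (Ainv p)))"
  have "esssup \<mu> ?f < \<infinity>"
    using adm unfolding admissible_def by blast
  then have "norm (csmult (alpha i p) (Ainv p)) \<le> inv_bound i" if "?f p \<le> esssup \<mu> ?f" for p
    using that unfolding inv_bound_def by (cases "esssup \<mu> ?f") auto
  then show ?thesis
    using esssup_AE[of ?f \<mu>] by (auto elim!: eventually_mono simp: norm_csmult)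
qed

definition regular :: "complex^'np \<Rightarrow> bool" where
  "regular p \<longleftrightarrow> p \<in> space \<mu> \<and> invertible (pmat alpha A p)
                  \<and> (\<forall>i. cmod (alpha i p) * norm (Ainv p) \<le> inv_bound i)"

lemma AE_regular: "AE p in \<mu>. regular p"
proof -
  have "AE p in \<mu>. \<forall>i. cmod (alpha i p) * norm (Ainv p) \<le> inv_bound i"
    using AE_inv_bound by (simp add: AE_all_countable)
  moreover have "AE p in \<mu>. invertible (pmat alpha A p)"
    using adm unfolding admissible_def by blast
  ultimately show ?thesis
    unfolding regular_def by (auto elim: eventually_mono intro: AE_I2)
qed

lemma regular_coeff_norm_pos: "regular p \<Longrightarrow> 0 < coeff_norm alpha p"
  unfolding regular_def by (blast intro: coeff_norm_pos[of alpha A])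

definition Ainv_bound :: real where "Ainv_bound = (\<Sum>i\<in>UNIV. inv_bound i)"
definition B_norm :: real where "B_norm = (\<Sum>j\<in>UNIV. norm (B j))"
definition C_norm :: real where "C_norm = (\<Sum>k\<in>UNIV. norm (C k))"

lemma bound_constants_nonneg: "0 \<le> Ainv_bound" "0 \<le> B_norm" "0 \<le> C_norm"
  by (simp_all add: Ainv_bound_def B_norm_def C_norm_def sum_nonneg inv_bound_nonneg)

lemma coeff_norm_Ainv_le: "regular p \<Longrightarrow> coeff_norm alpha p * norm (Ainv p) \<le> Ainv_bound"
  unfolding coeff_norm_def regular_def Ainv_bound_def sum_distrib_right by (intro sum_mono) auto

text \<open>The ess-sup bounds on \<open>alpha\<^sub>i A\<^sup>-\<^sup>1\<close> turn \<open>norm A\<^sup>-\<^sup>1\<close> into \<open>1 / coeff_norm alpha\<close>;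
  this is how every term below is dominated by the square-integrable \<open>ratio\<close>.\<close>
lemma coeff_norm_Ainv_ratio_le:
  assumes "regular p"
  shows "coeff_norm beta p * coeff_norm gamma p * norm (Ainv p) \<le> Ainv_bound * ratio p"
proof -
  have "0 < coeff_norm alpha p"
    using assms by (rule regular_coeff_norm_pos)
  then have "coeff_norm beta p * coeff_norm gamma p * norm (Ainv p)
      = ratio p * (coeff_norm alpha p * norm (Ainv p))"
    by (simp add: ratio_def field_simps)
  also have "\<dots> \<le> ratio p * Ainv_bound"
    by (intro mult_left_mono coeff_norm_Ainv_le assms ratio_nonneg)
  finally show ?thesis
    by (simp add: mult.commute)
qed

lemma ratio_square_integrable: "integrable \<mu> (\<lambda>p. (ratio p)\<^sup>2)"
proof (rule integrableI_bounded)
  show "(\<lambda>p. (ratio p)\<^sup>2) \<in> borel_measurable \<mu>"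
    using ratio_measurable by measurable
  have "AE p in \<mu>. ennreal (norm ((ratio p)\<^sup>2))
          = (ennreal (coeff_norm beta p * coeff_norm gamma p) / ennreal (coeff_norm alpha p))\<^sup>2"
    using AE_regular
  proof eventually_elim
    case (elim p)
    then have "0 < coeff_norm alpha p"
      by (rule regular_coeff_norm_pos)
    then show ?case
      by (simp add: ratio_def divide_ennreal ennreal_power coeff_norm_nonneg ratio_nonneg[unfolded ratio_def])
  qed
  then show "(\<integral>\<^sup>+ p. ennreal (norm ((ratio p)\<^sup>2)) \<partial>\<mu>) < \<infinity>"
    using ratio_L2 by (simp add: nn_integral_cong_AE coeff_norm_def)
qed

lemma Ainv_sandwich_le:
  assumes "regular p" and "0 \<le> nb" "0 \<le> nc"
    and "0 \<le> b" "b \<le> coeff_norm beta p * nb" and "0 \<le> c" "c \<le> coeff_norm gamma p * nc"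
  shows "c * norm (Ainv p) * b \<le> nc * nb * Ainv_bound * ratio p"
proof -
  have "c * norm (Ainv p) * b \<le> (coeff_norm gamma p * nc) * norm (Ainv p) * (coeff_norm beta p * nb)"
    using assms by (intro mult_mono mult_right_mono) simp_all
  also have "\<dots> = nc * nb * (coeff_norm beta p * coeff_norm gamma p * norm (Ainv p))"
    by (simp add: ac_simps)
  also have "\<dots> \<le> nc * nb * (Ainv_bound * ratio p)"
    using assms by (intro mult_left_mono coeff_norm_Ainv_ratio_le) simp_all
  finally show ?thesis
    by (simp add: ac_simps)
qed

lemma norm_pmat_Ainv_pmat_le:
  "regular p \<Longrightarrow> norm (pmat gamma C p) * norm (Ainv p) * norm (pmat beta B p) \<le> C_norm * B_norm * Ainv_bound * ratio p"
  by (rule Ainv_sandwich_le[OF _ bound_constants_nonneg(2,3) norm_ge_zero norm_pmat_le[of beta B p, folded B_norm_def]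
        norm_ge_zero norm_pmat_le[of gamma C p, folded C_norm_def]])

lemma misfit_square_integrable: "integrable \<mu> (\<lambda>p. (norm (y p - yhat0 p))\<^sup>2)"
proof -
  let ?c = "C_norm * B_norm * Ainv_bound"
  have "integrable \<mu> (\<lambda>p. (norm (y p))\<^sup>2)"
    using y_L2 y_meas by (intro integrableI_bounded) auto
  then have "integrable \<mu> (\<lambda>p. 2 * (norm (y p))\<^sup>2 + 2 * ?c\<^sup>2 * (ratio p)\<^sup>2)"
    using ratio_square_integrable by simp
  moreover have "(\<lambda>p. (norm (y p - yhat0 p))\<^sup>2) \<in> borel_measurable \<mu>"
    using y_meas yhat_measurable by measurable
  moreover have "AE p in \<mu>. norm ((norm (y p - yhat0 p))\<^sup>2) \<le> norm (2 * (norm (y p))\<^sup>2 + 2 * ?c\<^sup>2 * (ratio p)\<^sup>2)"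
    using AE_regular
  proof eventually_elim
    case (elim p)
    have "norm (yhat0 p) \<le> ?c * ratio p"
      unfolding yhat_def xhat_def
      using norm_matrix_mult_le_mult[OF order_refl norm_matrix_mult_le, of "pmat gamma C p" "Ainv p" "pmat beta B p"]
        norm_pmat_Ainv_pmat_le[OF elim] by (simp add: ac_simps)
    then have "(norm (yhat0 p))\<^sup>2 \<le> ?c\<^sup>2 * (ratio p)\<^sup>2"
      by (metis norm_ge_zero power_mono power_mult_distrib)
    moreover have "(norm (y p - yhat0 p))\<^sup>2 \<le> 2 * (norm (y p))\<^sup>2 + 2 * (norm (yhat0 p))\<^sup>2"
      using power_mono[OF norm_triangle_ineq4[of "y p" "yhat0 p"] norm_ge_zero, of 2]
        sum_squares_bound[of "norm (y p)" "norm (yhat0 p)"] by (simp add: power2_sum)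
    ultimately show ?case
      by simp
  qed
  ultimately show ?thesis
    by (rule Bochner_Integration.integrable_bound)
qed

lemma pmat_cvec_cnj:
  assumes "p \<in> space \<mu>"
  shows "pmat alpha X (cvec_cnj p) = cmat_cnj (pmat alpha X p)"
    and "pmat beta X' (cvec_cnj p) = cmat_cnj (pmat beta X' p)"
    and "pmat gamma X'' (cvec_cnj p) = cmat_cnj (pmat gamma X'' p)"
  using assms alpha_cnj beta_cnj gamma_cnj by (auto intro!: pmat_cnj)

lemma Ainv_cvec_cnj: "regular p \<Longrightarrow> Ainv (cvec_cnj p) = cmat_cnj (Ainv p)"
  unfolding regular_def by (simp add: pmat_cvec_cnj cmat_cnj_matrix_inv)

lemma xhat_cvec_cnj:
  assumes "regular p"
  shows "xhat alpha beta A B (cvec_cnj p) = cmat_cnj (xhat alpha beta A B p)"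
  using assms pmat_cvec_cnj(2)[of p B] Ainv_cvec_cnj[OF assms]
  by (simp add: xhat_def regular_def cmat_cnj_mult)

lemma yhat_cvec_cnj:
  assumes "regular p"
  shows "yhat0 (cvec_cnj p) = cmat_cnj (yhat0 p)"
  using assms pmat_cvec_cnj(3)[of p C] xhat_cvec_cnj[OF assms]
  by (simp add: yhat_def regular_def cmat_cnj_mult)

lemma Jcost_block_gradient:
  fixes Y :: "real^'c^'d \<Rightarrow> complex^'np \<Rightarrow> complex^'nf^'no"
    and U :: "complex^'np \<Rightarrow> complex^'d^'no" and V :: "complex^'np \<Rightarrow> complex^'nf^'c"
  assumes Ym: "\<And>H. Y H \<in> borel_measurable \<mu>" and Y0: "Y H0 = yhat0"
    and Um: "U \<in> borel_measurable \<mu>" and Vm: "V \<in> borel_measurable \<mu>"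
    and c: "0 \<le> c" and d: "0 < d"
    and UV: "\<And>p. regular p \<Longrightarrow> norm (U p) * norm (V p) \<le> c * ratio p"
    and remainder: "\<And>p H. regular p \<Longrightarrow> norm (H - H0) < d \<Longrightarrow>
          norm (Y H p - Y H0 p - U p ** cmat_of_real (H - H0) ** V p) \<le> c * ratio p * (norm (H - H0))\<^sup>2"
    and UV_cnj: "\<And>p. regular p \<Longrightarrow> U (cvec_cnj p) = cmat_cnj (U p) \<and> V (cvec_cnj p) = cmat_cnj (V p)"
    and integrand: "\<And>p. p \<in> space \<mu> \<Longrightarrow> cmat_adj (U p) ** (yhat0 p - y p) ** cmat_adj (V p) = I p"
  shows "\<exists>G. ((\<lambda>H. \<integral>p. (norm (y p - Y H p))\<^sup>2 \<partial>\<mu>) has_derivative (\<lambda>K. G \<bullet> K)) (at H0)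
           \<and> cmat_of_real G = csmult 2 (\<integral>p. I p \<partial>\<mu>)"
proof -
  have "\<exists>G. ((\<lambda>H. \<integral>p. (norm (y p - Y H p))\<^sup>2 \<partial>\<mu>) has_derivative (\<lambda>K. G \<bullet> K)) (at H0)
           \<and> cmat_of_real G = csmult 2 (\<integral>p. cmat_adj (U p) ** (Y H0 p - y p) ** cmat_adj (V p) \<partial>\<mu>)"
  proof (rule has_derivative_misfit_gradient[where g="\<lambda>p. c * ratio p", OF Ym y_meas _ _ _ _ Um Vm _ d])
    show "integrable \<mu> (\<lambda>p. (norm (y p - Y H0 p))\<^sup>2)"
      using misfit_square_integrable by (simp add: Y0)
    show "integrable \<mu> (\<lambda>p. (c * ratio p)\<^sup>2)"
      using ratio_square_integrable by (simp add: power_mult_distrib)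
    show "(\<lambda>p. c * ratio p) \<in> borel_measurable \<mu>"
      using ratio_measurable by measurable
    show "0 \<le> c * ratio p" for p
      using c ratio_nonneg by simp
    show "AE p in \<mu>. norm (U p) * norm (V p) \<le> c * ratio p"
      using AE_regular by eventually_elim (rule UV)
    show "AE p in \<mu>. \<forall>H. norm (H - H0) < d \<longrightarrow>
            norm (Y H p - Y H0 p - U p ** cmat_of_real (H - H0) ** V p) \<le> c * ratio p * (norm (H - H0))\<^sup>2"
      using AE_regular by eventually_elim (blast intro: remainder)
    show "AE p in \<mu>. U (cvec_cnj p) = cmat_cnj (U p) \<and> V (cvec_cnj p) = cmat_cnj (V p)
                    \<and> y (cvec_cnj p) = cmat_cnj (y p) \<and> Y H0 (cvec_cnj p) = cmat_cnj (Y H0 p)"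
      using AE_regular by eventually_elim (simp add: UV_cnj Y0 yhat_cvec_cnj y_cnj regular_def)
  qed
  moreover have "(\<integral>p. cmat_adj (U p) ** (Y H0 p - y p) ** cmat_adj (V p) \<partial>\<mu>) = (\<integral>p. I p \<partial>\<mu>)"
    by (rule Bochner_Integration.integral_cong) (simp_all add: Y0 integrand)
  ultimately show ?thesis
    by simp
qed

lemma Jcost_gradient_B:
  "\<exists>G. ((\<lambda>H. Jcost \<mu> y alpha beta gamma A (B(j := H)) C) has_derivative (\<lambda>H. G \<bullet> H)) (at (B j))
     \<and> cmat_of_real G = csmult 2 (\<integral>p. csmult (beta j (cvec_cnj p))
          (xdual alpha gamma A C p ** (yhat0 p - y p)) \<partial>\<mu>)"
proof -
  let ?U = "\<lambda>p. csmult (beta j p) (pmat gamma C p ** Ainv p)"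
  let ?V = "\<lambda>p::complex^'np. mat 1 :: complex^'nf^'nf"
  let ?c = "norm (mat 1 :: complex^'nf^'nf) * C_norm * Ainv_bound"
  have UV: "norm (?U p) * norm (?V p) \<le> ?c * ratio p" if "regular p" for p
  proof -
    have "norm (?U p) \<le> coeff_norm beta p * norm (pmat gamma C p) * norm (Ainv p)"
      unfolding norm_csmult coeff_norm_def mult.assoc
      by (intro mult_mono member_le_sum norm_matrix_mult_le) (simp_all add: sum_nonneg)
    also have "\<dots> \<le> C_norm * Ainv_bound * ratio p"
      using Ainv_sandwich_le[OF that _ bound_constants_nonneg(3) coeff_norm_nonneg[of beta p] _ norm_ge_zero
          norm_pmat_le[of gamma C p, folded C_norm_def], of 1]
      by (simp add: ac_simps)
    finally have "norm (?U p) \<le> C_norm * Ainv_bound * ratio p" .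
    from mult_right_mono[OF this norm_ge_zero[of "mat 1 :: complex^'nf^'nf"]] show ?thesis
      by (simp add: ac_simps)
  qed
  show ?thesis
    unfolding Jcost_def
  proof (rule Jcost_block_gradient[where U = ?U and V = ?V and c = ?c and d = 1])
    show "(\<lambda>p. yhat alpha beta gamma A (B(j := H)) C p) \<in> borel_measurable \<mu>" for H
      by (rule yhat_measurable)
    show "?U \<in> borel_measurable \<mu>"
      by (intro borel_measurable_csmult borel_measurable_matrix_mult borel_measurable_pmat
          Ainv_measurable gamma_measurable beta_measurable)
    show "norm (yhat alpha beta gamma A (B(j := H)) C p - yhat alpha beta gamma A (B(j := B j)) C p
            - ?U p ** cmat_of_real (H - B j) ** ?V p) \<le> ?c * ratio p * (norm (H - B j))\<^sup>2" for p H
      using ratio_nonneg[of p] bound_constants_nonneg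
      by (simp add: yhat_def xhat_def pmat_fun_upd matrix_add_ldistrib csmult_matrix_mult_left
          csmult_matrix_mult_right matrix_mul_assoc)
    show "?U (cvec_cnj p) = cmat_cnj (?U p) \<and> ?V (cvec_cnj p) = cmat_cnj (?V p)" if "regular p" for p
      using that by (simp add: regular_def beta_cnj pmat_cvec_cnj cmat_cnj_matrix_inv cmat_cnj_csmult
          cmat_cnj_mult cmat_cnj_mat1)
    show "cmat_adj (?U p) ** (yhat0 p - y p) ** cmat_adj (?V p)
          = csmult (beta j (cvec_cnj p)) (xdual alpha gamma A C p ** (yhat0 p - y p))" if "p \<in> space \<mu>" for p
      using that beta_cnj
      by (simp add: xdual_def cmat_adj_csmult cmat_adj_mult cmat_adj_mat1 csmult_matrix_mult_left matrix_mul_assoc)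
  qed (use UV bound_constants_nonneg in simp_all)
qed

lemma Jcost_gradient_C:
  "\<exists>G. ((\<lambda>H. Jcost \<mu> y alpha beta gamma A B (C(k := H))) has_derivative (\<lambda>H. G \<bullet> H)) (at (C k))
     \<and> cmat_of_real G = csmult 2 (\<integral>p. csmult (gamma k (cvec_cnj p))
          ((yhat0 p - y p) ** cmat_adj (xhat alpha beta A B p)) \<partial>\<mu>)"
proof -
  let ?U = "\<lambda>p. csmult (gamma k p) (mat 1 :: complex^'no^'no)"
  let ?V = "xhat alpha beta A B"
  let ?c = "norm (mat 1 :: complex^'no^'no) * B_norm * Ainv_bound"
  have UV: "norm (?U p) * norm (?V p) \<le> ?c * ratio p" if "regular p" for p
  proof -
    have "norm (?U p) * norm (?V p)
        \<le> (cmod (gamma k p) * norm (mat 1 :: complex^'no^'no)) * (norm (Ainv p) * norm (pmat beta B p))"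
      unfolding norm_csmult xhat_def by (intro mult_left_mono norm_matrix_mult_le) simp
    also have "\<dots> \<le> (coeff_norm gamma p * norm (mat 1 :: complex^'no^'no)) * (norm (Ainv p) * norm (pmat beta B p))"
      unfolding coeff_norm_def by (intro mult_right_mono member_le_sum) simp_all
    also have "\<dots> = norm (mat 1 :: complex^'no^'no) * (coeff_norm gamma p * norm (Ainv p) * norm (pmat beta B p))"
      by (simp add: ac_simps)
    also have "\<dots> \<le> norm (mat 1 :: complex^'no^'no) * (B_norm * Ainv_bound * ratio p)"
      using Ainv_sandwich_le[OF that bound_constants_nonneg(2) _ norm_ge_zero
          norm_pmat_le[of beta B p, folded B_norm_def] coeff_norm_nonneg[of gamma p], of 1]
      by (intro mult_left_mono) (simp_all add: ac_simps)
    finally show ?thesis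
      by (simp add: ac_simps)
  qed
  show ?thesis
    unfolding Jcost_def
  proof (rule Jcost_block_gradient[where U = ?U and V = ?V and c = ?c and d = 1])
    show "(\<lambda>p. yhat alpha beta gamma A B (C(k := H)) p) \<in> borel_measurable \<mu>" for H
      by (rule yhat_measurable)
    show "?U \<in> borel_measurable \<mu>"
      by (intro borel_measurable_csmult gamma_measurable borel_measurable_const)
    show "?V \<in> borel_measurable \<mu>"
      by (intro borel_measurable_xhat alpha_measurable beta_measurable)
    show "norm (yhat alpha beta gamma A B (C(k := H)) p - yhat alpha beta gamma A B (C(k := C k)) p
            - ?U p ** cmat_of_real (H - C k) ** ?V p) \<le> ?c * ratio p * (norm (H - C k))\<^sup>2" for p H
      using ratio_nonneg[of p] bound_constants_nonneg
      by (simp add: yhat_def pmat_fun_upd matrix_add_rdistrib csmult_matrix_mult_left)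
    show "?U (cvec_cnj p) = cmat_cnj (?U p) \<and> ?V (cvec_cnj p) = cmat_cnj (?V p)" if "regular p" for p
      using that by (simp add: regular_def gamma_cnj xhat_cvec_cnj cmat_cnj_csmult cmat_cnj_mat1)
    show "cmat_adj (?U p) ** (yhat0 p - y p) ** cmat_adj (?V p)
          = csmult (gamma k (cvec_cnj p)) ((yhat0 p - y p) ** cmat_adj (?V p))" if "p \<in> space \<mu>" for p
      using that gamma_cnj by (simp add: cmat_adj_csmult cmat_adj_mat1 csmult_matrix_mult_left)
  qed (use UV bound_constants_nonneg in simp_all)
qed

text \<open>Perturbing \<open>A\<^sub>i\<close> by \<open>K\<close> perturbs \<open>A(p)\<close> by \<open>P = alpha\<^sub>i(p) K\<close>; the ess-sup bound on
  \<open>alpha\<^sub>i A\<^sup>-\<^sup>1\<close> keeps \<open>A\<^sup>-\<^sup>1 P\<close> below \<open>1/2\<close> uniformly in \<open>p\<close>, so \<open>matrix_inv_perturb\<close> applies.\<close>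
lemma yhat_second_order_A:
  assumes reg: "regular p" and small: "norm (H - A i) < 1 / (2 * (inv_bound i + 1))"
  shows "norm (yhat alpha beta gamma (A(i := H)) B C p - yhat0 p
            - (- csmult (alpha i p) (pmat gamma C p ** Ainv p)) ** cmat_of_real (H - A i) ** xhat alpha beta A B p)
         \<le> 2 * (inv_bound i)\<^sup>2 * (C_norm * B_norm * Ainv_bound * ratio p) * (norm (H - A i))\<^sup>2"
proof -
  let ?m = "inv_bound i" and ?Ai = "Ainv p" and ?Bp = "pmat beta B p" and ?Cp = "pmat gamma C p"
  define P where "P = csmult (alpha i p) (cmat_of_real (H - A i))"
  define Z where "Z = matrix_inv (pmat alpha A p + P)"
  have aM: "cmod (alpha i p) * norm ?Ai \<le> ?m"
    using reg unfolding regular_def by blast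
  have nP: "norm P = cmod (alpha i p) * norm (H - A i)"
    by (simp add: P_def norm_csmult norm_cmat_of_real)
  have "norm (?Ai ** P) \<le> (cmod (alpha i p) * norm ?Ai) * norm (H - A i)"
    using norm_matrix_mult_le[of ?Ai P] by (simp add: nP ac_simps)
  also have "\<dots> \<le> ?m * (1 / (2 * (?m + 1)))"
    using aM small inv_bound_nonneg by (intro mult_mono) simp_all
  also have "\<dots> \<le> 1/2"
    using inv_bound_nonneg[of i] by (simp add: field_simps)
  finally have "norm (?Ai ** P) \<le> 1/2" .
  note perturb = matrix_inv_perturb[OF _ this, folded Z_def]
  have "yhat alpha beta gamma (A(i := H)) B C p - yhat0 p
          - (- csmult (alpha i p) (?Cp ** ?Ai)) ** cmat_of_real (H - A i) ** xhat alpha beta A B p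
        = ?Cp ** (Z - ?Ai + ?Ai ** P ** ?Ai) ** ?Bp"
    by (simp add: yhat_def xhat_def pmat_fun_upd Z_def P_def matrix_add_rdistrib matrix_diff_rdistrib
        matrix_add_ldistrib matrix_diff_ldistrib matrix_minus_left csmult_matrix_mult_left
        csmult_matrix_mult_right matrix_mul_assoc)
  also have "\<dots> = ?Cp ** (?Ai ** P ** ?Ai ** P ** Z) ** ?Bp"
    using reg perturb(3) by (simp add: regular_def)
  also have "norm \<dots> \<le> norm ?Cp * (norm ?Ai * norm P * norm ?Ai * norm P * (2 * norm ?Ai)) * norm ?Bp"
    using reg perturb(2) unfolding regular_def
    by (intro norm_matrix_mult_le_mult order_refl) auto
  also have "\<dots> = 2 * (cmod (alpha i p) * norm ?Ai)\<^sup>2 * (norm (H - A i))\<^sup>2 * (norm ?Cp * norm ?Ai * norm ?Bp)"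
    by (simp add: nP power2_eq_square ac_simps)
  also have "\<dots> \<le> 2 * ?m\<^sup>2 * (norm (H - A i))\<^sup>2 * (C_norm * B_norm * Ainv_bound * ratio p)"
    using power_mono[OF aM, of 2]
    by (intro mult_mono[OF mult_right_mono[OF mult_left_mono] norm_pmat_Ainv_pmat_le[OF reg]]) simp_all
  finally show ?thesis
    by (simp add: ac_simps)
qed

lemma first_order_bound_A:
  assumes "regular p"
  shows "norm (- csmult (alpha i p) (pmat gamma C p ** Ainv p)) * norm (xhat alpha beta A B p)
           \<le> inv_bound i * (C_norm * B_norm * Ainv_bound * ratio p)"
proof -
  have "norm (- csmult (alpha i p) (pmat gamma C p ** Ainv p)) * norm (xhat alpha beta A B p)
      \<le> (cmod (alpha i p) * norm (Ainv p)) * (norm (pmat gamma C p) * norm (Ainv p) * norm (pmat beta B p))"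
    unfolding norm_minus_cancel norm_csmult xhat_def mult.assoc
    by (intro mult_left_mono order_trans[OF mult_mono[OF norm_matrix_mult_le norm_matrix_mult_le]])
       (simp_all add: ac_simps)
  also have "\<dots> \<le> inv_bound i * (C_norm * B_norm * Ainv_bound * ratio p)"
    using assms by (intro mult_mono[OF _ norm_pmat_Ainv_pmat_le]) (simp_all add: regular_def inv_bound_nonneg)
  finally show ?thesis .
qed

lemma Jcost_gradient_A:
  "\<exists>G. ((\<lambda>H. Jcost \<mu> y alpha beta gamma (A(i := H)) B C) has_derivative (\<lambda>H. G \<bullet> H)) (at (A i))
     \<and> cmat_of_real G = csmult 2 (\<integral>p. csmult (alpha i (cvec_cnj p))
          (xdual alpha gamma A C p ** (y p - yhat0 p) ** cmat_adj (xhat alpha beta A B p)) \<partial>\<mu>)"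
proof -
  let ?U = "\<lambda>p. - csmult (alpha i p) (pmat gamma C p ** Ainv p)"
  let ?V = "xhat alpha beta A B"
  let ?m = "inv_bound i"
  let ?c = "2 * (?m + 1)\<^sup>2 * (C_norm * B_norm * Ainv_bound)"
  have m: "?m \<le> 2 * (?m + 1)\<^sup>2" "2 * ?m\<^sup>2 \<le> 2 * (?m + 1)\<^sup>2"
    using inv_bound_nonneg[of i] by (simp_all add: power2_eq_square algebra_simps)
  show ?thesis
    unfolding Jcost_def
  proof (rule Jcost_block_gradient[where U = ?U and V = ?V and c = ?c and d = "1 / (2 * (?m + 1))"])
    show "(\<lambda>p. yhat alpha beta gamma (A(i := H)) B C p) \<in> borel_measurable \<mu>" for H
      by (rule yhat_measurable)
    show "?U \<in> borel_measurable \<mu>"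
      by (intro borel_measurable_uminus borel_measurable_csmult borel_measurable_matrix_mult borel_measurable_pmat
          Ainv_measurable gamma_measurable alpha_measurable)
    show "?V \<in> borel_measurable \<mu>"
      by (intro borel_measurable_xhat alpha_measurable beta_measurable)
    have "0 \<le> C_norm * B_norm * Ainv_bound * ratio p" for p
      using bound_constants_nonneg ratio_nonneg by simp
    then show "norm (?U p) * norm (?V p) \<le> ?c * ratio p" if "regular p" for p
      using order_trans[OF first_order_bound_A[OF that] mult_right_mono[OF m(1)]] by (simp add: ac_simps)
    show "norm (yhat alpha beta gamma (A(i := H)) B C p - yhat alpha beta gamma (A(i := A i)) B C p
            - ?U p ** cmat_of_real (H - A i) ** ?V p) \<le> ?c * ratio p * (norm (H - A i))\<^sup>2"
      if "regular p" "norm (H - A i) < 1 / (2 * (?m + 1))" for p H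
      using order_trans[OF yhat_second_order_A[OF that] mult_right_mono[OF mult_right_mono[OF m(2)]]]
        \<open>\<And>p. 0 \<le> C_norm * B_norm * Ainv_bound * ratio p\<close>
      by (simp add: ac_simps)
    show "?U (cvec_cnj p) = cmat_cnj (?U p) \<and> ?V (cvec_cnj p) = cmat_cnj (?V p)" if "regular p" for p
      using that by (simp add: regular_def alpha_cnj pmat_cvec_cnj cmat_cnj_matrix_inv xhat_cvec_cnj
          cmat_cnj_minus cmat_cnj_csmult cmat_cnj_mult)
    show "cmat_adj (?U p) ** (yhat0 p - y p) ** cmat_adj (?V p)
          = csmult (alpha i (cvec_cnj p)) (xdual alpha gamma A C p ** (y p - yhat0 p) ** cmat_adj (?V p))"
      if "p \<in> space \<mu>" for p
      using that alpha_cnj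
      by (simp add: xdual_def cmat_adj_minus cmat_adj_csmult cmat_adj_mult matrix_minus_left
          matrix_diff_ldistrib matrix_diff_rdistrib csmult_matrix_mult_left csmult_diff matrix_mul_assoc)
  qed (use inv_bound_nonneg[of i] bound_constants_nonneg in simp_all)
qed

end

theorem theorem1:
  fixes \<mu> :: "(complex^'np) measure"
    and y :: "complex^'np \<Rightarrow> complex^'nf^'no"
    and alpha :: "'qa::finite \<Rightarrow> complex^'np \<Rightarrow> complex"
    and beta :: "'qb::finite \<Rightarrow> complex^'np \<Rightarrow> complex"
    and gamma :: "'qc::finite \<Rightarrow> complex^'np \<Rightarrow> complex"
    and A :: "'qa \<Rightarrow> real^'r^'r"
    and B :: "'qb \<Rightarrow> real^'nf^'r"
    and C :: "'qc \<Rightarrow> real^'r^'no"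
  assumes P_cnj: "\<forall>p\<in>space \<mu>. cvec_cnj p \<in> space \<mu>"
    and S_cnj: "\<forall>S\<in>sets \<mu>. cvec_cnj ` S \<in> sets \<mu>"
    and mu_cnj: "\<forall>S\<in>sets \<mu>. emeasure \<mu> (cvec_cnj ` S) = emeasure \<mu> S"
    and y_meas: "y \<in> borel_measurable \<mu>"
    and y_L2: "(\<integral>\<^sup>+ p. ennreal ((norm (y p))\<^sup>2) \<partial>\<mu>) < \<infinity>"
    and y_cnj: "\<forall>p\<in>space \<mu>. cmat_cnj (y p) = y (cvec_cnj p)"
    and alpha_meas: "\<forall>i. alpha i \<in> borel_measurable \<mu>"
    and beta_meas: "\<forall>j. beta j \<in> borel_measurable \<mu>"
    and gamma_meas: "\<forall>k. gamma k \<in> borel_measurable \<mu>"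
    and alpha_cnj: "\<forall>i. \<forall>p\<in>space \<mu>. alpha i (cvec_cnj p) = cnj (alpha i p)"
    and beta_cnj: "\<forall>j. \<forall>p\<in>space \<mu>. beta j (cvec_cnj p) = cnj (beta j p)"
    and gamma_cnj: "\<forall>k. \<forall>p\<in>space \<mu>. gamma k (cvec_cnj p) = cnj (gamma k p)"
    and ratio_L2: "(\<integral>\<^sup>+ p. (ennreal ((\<Sum>j\<in>UNIV. cmod (beta j p)) * (\<Sum>k\<in>UNIV. cmod (gamma k p)))
                        / ennreal (\<Sum>i\<in>UNIV. cmod (alpha i p)))\<^sup>2 \<partial>\<mu>) < \<infinity>"
    and adm: "admissible \<mu> alpha A"
  shows
    "(\<forall>i. \<exists>G. ((\<lambda>H. Jcost \<mu> y alpha beta gamma (A(i := H)) B C) has_derivative (\<lambda>H. G \<bullet> H)) (at (A i))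
          \<and> cmat_of_real G = csmult 2 (\<integral>p. csmult (alpha i (cvec_cnj p))
               (xdual alpha gamma A C p ** (y p - yhat alpha beta gamma A B C p)
                 ** cmat_adj (xhat alpha beta A B p)) \<partial>\<mu>))
   \<and> (\<forall>j. \<exists>G. ((\<lambda>H. Jcost \<mu> y alpha beta gamma A (B(j := H)) C) has_derivative (\<lambda>H. G \<bullet> H)) (at (B j))
          \<and> cmat_of_real G = csmult 2 (\<integral>p. csmult (beta j (cvec_cnj p))
               (xdual alpha gamma A C p ** (yhat alpha beta gamma A B C p - y p)) \<partial>\<mu>))
   \<and> (\<forall>k. \<exists>G. ((\<lambda>H. Jcost \<mu> y alpha beta gamma A B (C(k := H))) has_derivative (\<lambda>H. G \<bullet> H)) (at (C k))
          \<and> cmat_of_real G = csmult 2 (\<integral>p. csmult (gamma k (cvec_cnj p))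
               ((yhat alpha beta gamma A B C p - y p) ** cmat_adj (xhat alpha beta A B p)) \<partial>\<mu>))"
proof -
  interpret reduced_model \<mu> y alpha beta gamma A B C
    by unfold_locales (fact assms)+
  show ?thesis
    using Jcost_gradient_A Jcost_gradient_B Jcost_gradient_C by blast
qed

end
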